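(* Fix any $\varepsilon>0$ and $n\in\mathbb N_+$. Consider the algorithm which, given a simple undirected graph $G=([n],E)$: sets $\varepsilon_0=\varepsilon/2$; for each $v\in[n]$ independently chooses $c_1(v),c_2(v)\in\{-1,+1\}$ uniformly at random; lets $\ell(v)=|\{u:\{u,v\}\in E,\ c_1(u)=c_1(v)\}|$; for each $v$ samples independent $\zeta_v\sim\mathrm{DLap}(1/\varepsilon_0)$ and sets $c(v)=c_1(v)$ if $\ell(v)-\lceil\frac{d(v)-1}2\rceil+\zeta_v\le0$ and $c(v)=c_2(v)$ otherwise; and outputs $S=\{v:c(v)=+1\}$. This algorithm is $(\varepsilon,0)$-differentially private. Furthermore, if $G$ is triangle-free, then for every edge $\{u,v\}\in E$, the probability that exactly one of $u,v$ lies in $S$ is at least $$\frac12+\Omega\left(\frac1{\sqrt{d(u)+1/\varepsilon^2}}+\frac1{\sqrt{d(v)+1/\varepsilon^2}}\right),$$ with an absolute hidden constant.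
   Context: $d(v)$ is the degree of $v$ in $G$. $\mathrm{DLap}(1/\varepsilon_0)$ is the discrete Laplace distribution on $\mathbb Z$ with mass $\frac{e^{\varepsilon_0}-1}{e^{\varepsilon_0}+1}e^{-\varepsilon_0|x|}$ at $x$. Edge-level privacy: two graphs on vertex set $[n]$ are neighboring if they differ by exactly one edge; $(\varepsilon,0)$-DP means $\Pr[\mathcal M(G)\in T]\le e^\varepsilon\Pr[\mathcal M(G')\in T]$ for all neighboring $G,G'$ and output sets $T$. *)

theory Defs
  imports "HOL-Probability.Probability"
begin

text \<open>Vertex set [n] is represented as {0..<n}. A simple undirected graph is a set
of 2-element subsets of the vertex set.\<close>

definition simple_graph :: "nat \<Rightarrow> nat set set \<Rightarrow> bool" where
  "simple_graph n E \<longleftrightarrow> E \<subseteq> {{u, v} | u v. u \<noteq> v \<and> u < n \<and> v < n}"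

definition degree :: "nat set set \<Rightarrow> nat \<Rightarrow> nat" where
  "degree E v = card {u. {u, v} \<in> E}"

definition triangle_free :: "nat set set \<Rightarrow> bool" where
  "triangle_free E \<longleftrightarrow> \<not> (\<exists>a b c. {a, b} \<in> E \<and> {b, c} \<in> E \<and> {a, c} \<in> E)"

definition edge_neighbors :: "nat \<Rightarrow> nat set set \<Rightarrow> nat set set \<Rightarrow> bool" where
  "edge_neighbors n E E' \<longleftrightarrow> simple_graph n E \<and> simple_graph n E' \<and>
     card ((E - E') \<union> (E' - E)) = 1"

text \<open>Discrete Laplace distribution DLap(1/eps0) on the integers, with mass
  (e^eps0 - 1)/(e^eps0 + 1) * e^(-eps0 |x|) at x.\<close>
definition dlap :: "real \<Rightarrow> int pmf" where
  "dlap eps0 = embed_pmf (\<lambda>x::int. (exp eps0 - 1) / (exp eps0 + 1) * exp (- eps0 * \<bar>real_of_int x\<bar>))"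

text \<open>Uniform random sign: True stands for +1, False for -1.\<close>
definition coin :: "bool pmf" where
  "coin = pmf_of_set UNIV"

definition alg_output :: "nat \<Rightarrow> nat set set \<Rightarrow> (nat \<Rightarrow> bool) \<Rightarrow> (nat \<Rightarrow> bool) \<Rightarrow> (nat \<Rightarrow> int) \<Rightarrow> nat set" where
  "alg_output n E c1 c2 zeta =
     (let l = (\<lambda>v. card {u. {u, v} \<in> E \<and> c1 u = c1 v});
          c = (\<lambda>v. if int (l v) - \<lceil>(real (degree E v) - 1) / 2\<rceil> + zeta v \<le> 0
                    then c1 v else c2 v)
      in {v. v < n \<and> c v})"

definition alg :: "real \<Rightarrow> nat \<Rightarrow> nat set set \<Rightarrow> nat set pmf" where
  "alg eps n E =
     map_pmf (\<lambda>r. alg_output n E (\<lambda>v. fst (r v)) (\<lambda>v. fst (snd (r v))) (\<lambda>v. snd (snd (r v))))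
       (Pi_pmf {..<n} (False, False, 0) (\<lambda>_. pair_pmf coin (pair_pmf coin (dlap (eps / 2)))))"

end

(*
  Privacy: once the coins c1, c2 are fixed, the output depends on the noise only through the
  independent bits [zeta_v <= t(v)] with t(v) = ceil((d(v) - 1) / 2) - l(v). Adding or removing
  one edge {a, b} moves t(a) and t(b) by at most one and leaves every other threshold unchanged,
  and a unit move of a threshold changes the law of its bit by a factor at most e^(eps/2),
  because the discrete Laplace density changes by at most that factor under unit shifts.

  Utility: conditioned on the randomness of all vertices other than u and v, the cut probability
  is an explicit expression in the keep thresholds of u and v. As G is triangle-free, u and v
  have no common neighbour, so averaging over the other vertices gives
  1/2 + (p_u(0) p_v(0) - p_u(1) p_v(1)) / 4, where p_u(k) is the probability that u keeps its
  first colour when k = [c1(u) = c1(v)], computed from a Bin(d(u) - 1, 1/2) count of agreeing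
  neighbours. The gap p(0) - p(1) is the probability that this count plus the noise hits the
  threshold exactly; the central binomial coefficient and the Laplace mass on a window of width
  sqrt d bound it below by a constant times 1 / sqrt(d + 1/eps^2).
*)

theory Submission
  imports Defs
begin

section \<open>Discrete Laplace noise\<close>

definition dlap_coeff :: "real \<Rightarrow> real" where
  "dlap_coeff e0 = (exp e0 - 1) / (exp e0 + 1)"

lemma nn_integral_count_space_int:
  fixes f :: "int \<Rightarrow> ennreal"
  shows "(\<integral>\<^sup>+x. f x \<partial>count_space UNIV) =
         (\<integral>\<^sup>+n. f (int n) \<partial>count_space UNIV) + (\<integral>\<^sup>+n. f (- int n - 1) \<partial>count_space UNIV)"
proof -
  have "(\<integral>\<^sup>+x. f x \<partial>count_space UNIV) =
        (\<integral>\<^sup>+x. f x * indicator {0..} x + f x * indicator {..<0} x \<partial>count_space UNIV)"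
    by (intro nn_integral_cong) (auto simp: indicator_def)
  also have "\<dots> = (\<integral>\<^sup>+x. f x \<partial>count_space {0..}) + (\<integral>\<^sup>+x. f x \<partial>count_space {..<0})"
    by (subst nn_integral_add) (auto simp: nn_integral_count_space_indicator)
  also have "(\<integral>\<^sup>+x. f x \<partial>count_space {0..}) = (\<integral>\<^sup>+n. f (int n) \<partial>count_space UNIV)"
    by (rule nn_integral_bij_count_space[symmetric])
       (auto simp: bij_betw_def image_def intro: exI[of _ "nat _"])
  also have "(\<integral>\<^sup>+x. f x \<partial>count_space {..<0}) = (\<integral>\<^sup>+n. f (- int n - 1) \<partial>count_space UNIV)"
    by (rule nn_integral_bij_count_space[symmetric])
       (auto simp: bij_betw_def inj_on_def image_def intro: exI[of _ "nat (- _ - 1)"])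
  finally show ?thesis .
qed

lemma nn_integral_geometric:
  fixes a r :: real
  assumes "0 \<le> a" "0 \<le> r" "r < 1"
  shows "(\<integral>\<^sup>+n. ennreal (a * r ^ n) \<partial>count_space UNIV) = ennreal (a / (1 - r))"
proof -
  have "(\<lambda>n. a * r ^ n) sums (a * (1 / (1 - r)))"
    using assms by (intro sums_mult geometric_sums) auto
  then show ?thesis
    unfolding nn_integral_count_space_nat using assms by (subst suminf_ennreal2) (auto simp: sums_iff)
qed

lemma nn_integral_dlap_density:
  assumes e0: "e0 > 0"
  shows "(\<integral>\<^sup>+x. ennreal (dlap_coeff e0 * exp (- e0 * \<bar>real_of_int x\<bar>)) \<partial>count_space UNIV) = 1"
proof -
  define a r where "a = dlap_coeff e0" and "r = exp (- e0)"
  have r: "0 < r" "r < 1" and a: "0 \<le> a" using e0 by (auto simp: r_def a_def dlap_coeff_def)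
  have pos: "ennreal (a * exp (- e0 * \<bar>real_of_int (int n)\<bar>)) = ennreal (a * r ^ n)" for n
    by (simp add: r_def exp_of_nat_mult[symmetric] mult_ac)
  have neg: "ennreal (a * exp (- e0 * \<bar>real_of_int (- int n - 1)\<bar>)) = ennreal (a * r * r ^ n)" for n
    by (simp add: r_def exp_of_nat_mult[symmetric] exp_add[symmetric] algebra_simps)
  have "(\<integral>\<^sup>+x. ennreal (a * exp (- e0 * \<bar>real_of_int x\<bar>)) \<partial>count_space UNIV) =
        (\<integral>\<^sup>+n. ennreal (a * r ^ n) \<partial>count_space UNIV) + (\<integral>\<^sup>+n. ennreal (a * r * r ^ n) \<partial>count_space UNIV)"
    by (simp only: nn_integral_count_space_int pos neg)
  also have "\<dots> = ennreal (a / (1 - r)) + ennreal (a * r / (1 - r))"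
    using a r by (simp add: nn_integral_geometric)
  also have "\<dots> = ennreal (a / (1 - r) + a * r / (1 - r))"
    using a r by (intro ennreal_plus[symmetric]) auto
  also have "a / (1 - r) + a * r / (1 - r) = 1"
  proof -
    have E: "exp e0 > 1" "exp e0 * exp e0 \<noteq> 1"
      using e0 mult_strict_mono[of 1 "exp e0" 1 "exp e0"] by auto
    have r_inv: "r = 1 / exp e0" by (simp add: r_def exp_minus inverse_eq_divide)
    have "a / (1 - r) + a * r / (1 - r) = a * (1 + r) / (1 - r)"
      by (simp add: add_divide_distrib[symmetric] distrib_left)
    also have "\<dots> = 1" unfolding r_inv a_def dlap_coeff_def using E by (simp add: field_simps)
    finally show ?thesis .
  qed
  finally show ?thesis by (simp only: a_def ennreal_1)
qed

lemma pmf_dlap: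
  assumes "e0 > 0"
  shows "pmf (dlap e0) x = dlap_coeff e0 * exp (- e0 * \<bar>real_of_int x\<bar>)"
  unfolding dlap_def dlap_coeff_def[symmetric]
proof (rule pmf_embed_pmf)
  show "0 \<le> dlap_coeff e0 * exp (- e0 * \<bar>real_of_int x\<bar>)" for x
    using assms by (simp add: dlap_coeff_def)
qed (rule nn_integral_dlap_density[OF assms])

lemma dlap_coeff_pos: "e0 > 0 \<Longrightarrow> dlap_coeff e0 > 0"
  unfolding dlap_coeff_def by (simp add: add_pos_pos)

lemma pmf_dlap_shift_le:
  assumes e0: "e0 > 0" and s: "\<bar>s\<bar> \<le> 1"
  shows "pmf (dlap e0) (y + s) \<le> exp e0 * pmf (dlap e0) y"
proof -
  have "e0 * \<bar>real_of_int y\<bar> \<le> e0 * (\<bar>real_of_int (y + s)\<bar> + 1)"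
    using e0 s by (intro mult_left_mono) auto
  then have "exp (- e0 * \<bar>real_of_int (y + s)\<bar>) \<le> exp (e0 + - e0 * \<bar>real_of_int y\<bar>)"
    by (simp only: exp_le_cancel_iff) (simp add: algebra_simps)
  then have "dlap_coeff e0 * exp (- e0 * \<bar>real_of_int (y + s)\<bar>)
             \<le> dlap_coeff e0 * (exp e0 * exp (- e0 * \<bar>real_of_int y\<bar>))"
    using dlap_coeff_pos[OF e0] by (simp only: exp_add mult_le_cancel_left_pos)
  then show ?thesis by (simp add: pmf_dlap[OF e0] mult_ac)
qed

lemma dlap_symmetric:
  assumes e0: "e0 > 0"
  shows "map_pmf uminus (dlap e0) = dlap e0"
proof (rule pmf_eqI)
  fix x :: int
  have "pmf (map_pmf uminus (dlap e0)) (- (- x)) = pmf (dlap e0) (- x)"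
    by (rule pmf_map_inj') (auto simp: inj_on_def)
  then show "pmf (map_pmf uminus (dlap e0)) x = pmf (dlap e0) x" by (simp add: pmf_dlap[OF e0])
qed

lemma prob_dlap_nonpos_ge_half:
  assumes e0: "e0 > 0"
  shows "measure_pmf.prob (dlap e0) {z. z \<le> 0} \<ge> 1 / 2"
proof -
  let ?P = "measure_pmf.prob (dlap e0)"
  have "?P {z. 0 \<le> z} = measure_pmf.prob (map_pmf uminus (dlap e0)) {z. 0 \<le> z}"
    by (simp add: dlap_symmetric[OF e0])
  also have "\<dots> = ?P {z. z \<le> 0}" by (simp add: vimage_def)
  finally have sym: "?P {z. 0 \<le> z} = ?P {z. z \<le> 0}" .
  have "{z::int. z \<le> 0} \<union> {z. 0 \<le> z} = UNIV" by auto
  then have "1 = ?P ({z. z \<le> 0} \<union> {z. 0 \<le> z})" by simp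
  also have "\<dots> \<le> ?P {z. z \<le> 0} + ?P {z. 0 \<le> z}"
    by (rule measure_subadditive) auto
  finally show ?thesis using sym by simp
qed

lemma sum_pmf_dlap_ge:
  assumes e0: "e0 > 0"
  shows "(\<Sum>j\<le>J. pmf (dlap e0) (int j)) \<ge> (1 - exp (- e0 * (real J + 1))) / 2"
proof -
  define r where "r = exp (- e0)"
  define E where "E = exp e0"
  have r0: "0 < r" "r < 1" using e0 by (auto simp: r_def)
  have E1: "E > 1" using e0 by (simp add: E_def)
  have rE: "r = 1 / E" by (simp add: r_def E_def exp_minus field_simps)
  have "(\<Sum>j\<le>J. pmf (dlap e0) (int j)) = (\<Sum>j<Suc J. dlap_coeff e0 * r ^ j)"
    by (intro sum.cong)
       (auto simp: pmf_dlap[OF e0] r_def exp_of_nat_mult[symmetric] mult_ac lessThan_Suc_atMost)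
  also have "\<dots> = dlap_coeff e0 * (\<Sum>j<Suc J. r ^ j)" by (rule sum_distrib_left[symmetric])
  also have "\<dots> = dlap_coeff e0 * ((1 - r ^ Suc J) / (1 - r))"
    using r0 by (subst sum_gp_strict) simp
  also have "\<dots> = dlap_coeff e0 / (1 - r) * (1 - r ^ Suc J)" by simp
  also have "dlap_coeff e0 / (1 - r) = E / (E + 1)"
  proof -
    have "1 * 1 < E * E" using E1 by (intro mult_strict_mono) auto
    then have "E * E - 1 \<noteq> 0" by simp
    then show ?thesis unfolding dlap_coeff_def E_def[symmetric] rE using E1 by (simp add: field_simps)
  qed
  also have "r ^ Suc J = exp (- e0 * (real J + 1))"
  proof -
    have "r ^ Suc J = exp (real (Suc J) * (- e0))" unfolding r_def by (rule exp_of_nat_mult[symmetric])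
    also have "real (Suc J) * (- e0) = - e0 * (real J + 1)" by (simp add: algebra_simps)
    finally show ?thesis .
  qed
  finally have eq: "(\<Sum>j\<le>J. pmf (dlap e0) (int j)) = E / (E + 1) * (1 - exp (- e0 * (real J + 1)))" .
  have "1 / 2 \<le> E / (E + 1)" using E1 by (simp add: field_simps)
  from mult_right_mono[OF this, of "1 - exp (- e0 * (real J + 1))"] show ?thesis
    unfolding eq using e0 by simp
qed

lemma measure_pmf_prob_le_pointwise:
  assumes "\<And>x. x \<in> A \<Longrightarrow> pmf p x \<le> c * pmf q x" "c \<ge> 0"
  shows "measure_pmf.prob p A \<le> c * measure_pmf.prob q A"
proof -
  have "ennreal (measure_pmf.prob p A) = emeasure (measure_pmf p) A"
    by (simp add: measure_pmf.emeasure_eq_measure)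
  also have "\<dots> = (\<integral>\<^sup>+x. ennreal (pmf p x) * indicator A x \<partial>count_space UNIV)"
    by (simp add: nn_integral_measure_pmf[symmetric])
  also have "\<dots> \<le> (\<integral>\<^sup>+x. ennreal c * (ennreal (pmf q x) * indicator A x) \<partial>count_space UNIV)"
    using assms by (intro nn_integral_mono)
      (auto simp: indicator_def ennreal_mult[symmetric] intro: ennreal_leI)
  also have "\<dots> = ennreal c * (\<integral>\<^sup>+x. ennreal (pmf q x) * indicator A x \<partial>count_space UNIV)"
    by (rule nn_integral_cmult) auto
  also have "(\<integral>\<^sup>+x. ennreal (pmf q x) * indicator A x \<partial>count_space UNIV) = (\<integral>\<^sup>+x. indicator A x \<partial>measure_pmf q)"
    by (rule nn_integral_measure_pmf[symmetric])
  also have "\<dots> = ennreal (measure_pmf.prob q A)"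
    by (simp add: measure_pmf.emeasure_eq_measure)
  also have "ennreal c * \<dots> = ennreal (c * measure_pmf.prob q A)"
    using assms by (simp add: ennreal_mult)
  finally show ?thesis using assms by (simp add: ennreal_le_iff)
qed

lemma measure_pmf_bind_le:
  assumes "\<And>x. x \<in> set_pmf M \<Longrightarrow> measure_pmf.prob (N x) X \<le> c * measure_pmf.prob (N' x) X" "c \<ge> 0"
  shows "measure_pmf.prob (M \<bind> N) X \<le> c * measure_pmf.prob (M \<bind> N') X"
proof -
  have "ennreal (measure_pmf.prob (M \<bind> N) X) = emeasure (measure_pmf (M \<bind> N)) X"
    by (simp add: measure_pmf.emeasure_eq_measure)
  also have "\<dots> = (\<integral>\<^sup>+x. emeasure (measure_pmf (N x)) X \<partial>measure_pmf M)" by simp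
  also have "\<dots> \<le> (\<integral>\<^sup>+x. ennreal c * emeasure (measure_pmf (N' x)) X \<partial>measure_pmf M)"
  proof (intro nn_integral_mono_AE AE_pmfI)
    fix x assume "x \<in> set_pmf M"
    then have "ennreal (measure_pmf.prob (N x) X) \<le> ennreal (c * measure_pmf.prob (N' x) X)"
      using assms by (intro ennreal_leI) auto
    then show "emeasure (measure_pmf (N x)) X \<le> ennreal c * emeasure (measure_pmf (N' x)) X"
      using assms by (simp add: measure_pmf.emeasure_eq_measure ennreal_mult)
  qed
  also have "\<dots> = ennreal c * (\<integral>\<^sup>+x. emeasure (measure_pmf (N' x)) X \<partial>measure_pmf M)"
    by (rule nn_integral_cmult) auto
  also have "(\<integral>\<^sup>+x. emeasure (measure_pmf (N' x)) X \<partial>measure_pmf M) = emeasure (measure_pmf (M \<bind> N')) X"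
    by simp
  also have "\<dots> = ennreal (measure_pmf.prob (M \<bind> N') X)"
    by (simp add: measure_pmf.emeasure_eq_measure)
  also have "ennreal c * \<dots> = ennreal (c * measure_pmf.prob (M \<bind> N') X)"
    using assms by (simp add: ennreal_mult)
  finally show ?thesis using assms by (simp add: ennreal_le_iff)
qed

lemma measure_pmf_vimage_shift_le:
  fixes p :: "int pmf"
  assumes "\<And>y. pmf p (y + s) \<le> c * pmf p y" "c \<ge> 0"
  shows "measure_pmf.prob p ((\<lambda>z. z - s) -` A) \<le> c * measure_pmf.prob p A"
proof -
  have "measure_pmf.prob p ((\<lambda>z. z - s) -` A) = measure_pmf.prob (map_pmf (\<lambda>z. z - s) p) A"
    by simp
  also have "\<dots> \<le> c * measure_pmf.prob p A"
  proof (rule measure_pmf_prob_le_pointwise)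
    fix y
    have "pmf (map_pmf (\<lambda>z. z - s) p) ((y + s) - s) = pmf p (y + s)"
      by (rule pmf_map_inj') (auto simp: inj_on_def)
    then show "pmf (map_pmf (\<lambda>z. z - s) p) y \<le> c * pmf p y" using assms(1)[of y] by simp
  qed (rule assms(2))
  finally show ?thesis .
qed

lemma pmf_map_threshold_le:
  fixes p :: "int pmf"
  assumes shift: "\<And>y s. \<bar>s\<bar> \<le> 1 \<Longrightarrow> pmf p (y + s) \<le> c * pmf p y"
    and c: "c \<ge> 0" and \<theta>: "\<bar>\<theta> - \<theta>'\<bar> \<le> 1"
  shows "pmf (map_pmf (\<lambda>z. z \<le> \<theta>) p) b \<le> c * pmf (map_pmf (\<lambda>z. z \<le> \<theta>') p) b"
proof (cases b)
  case True
  have "measure_pmf.prob p {z. z \<le> \<theta>} \<le> measure_pmf.prob p ((\<lambda>z. z - 1) -` {z. z \<le> \<theta>'})"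
    using \<theta> by (intro measure_pmf.finite_measure_mono) auto
  also have "\<dots> \<le> c * measure_pmf.prob p {z. z \<le> \<theta>'}"
    using shift[where s = 1] c by (intro measure_pmf_vimage_shift_le) auto
  finally show ?thesis using True by (simp add: pmf_map vimage_def)
next
  case False
  have "measure_pmf.prob p {z. \<theta> < z} \<le> measure_pmf.prob p ((\<lambda>z. z - (- 1)) -` {z. \<theta>' < z})"
    using \<theta> by (intro measure_pmf.finite_measure_mono) auto
  also have "\<dots> \<le> c * measure_pmf.prob p {z. \<theta>' < z}"
    using shift[where s = "- 1"] c by (intro measure_pmf_vimage_shift_le) auto
  finally show ?thesis using False by (simp add: pmf_map vimage_def not_le)
qed

lemma Pi_pmf_map_dependent:
  assumes "finite A"
  shows "Pi_pmf A d' (\<lambda>x. map_pmf (g x) (p x)) =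
         map_pmf (\<lambda>h x. if x \<in> A then g x (h x) else d') (Pi_pmf A d p)"
proof -
  have "Pi_pmf A d' (\<lambda>x. map_pmf (g x) (p x)) = Pi_pmf A d' (\<lambda>x. p x \<bind> (\<lambda>y. return_pmf (g x y)))"
    by (simp add: map_pmf_def)
  also have "\<dots> = Pi_pmf A d p \<bind> (\<lambda>h. Pi_pmf A d' (\<lambda>x. return_pmf (g x (h x))))"
    by (rule Pi_pmf_bind[OF assms])
  also have "\<dots> = Pi_pmf A d p \<bind> (\<lambda>h. return_pmf (\<lambda>x. if x \<in> A then g x (h x) else d'))"
    using assms by simp
  also have "\<dots> = map_pmf (\<lambda>h x. if x \<in> A then g x (h x) else d') (Pi_pmf A d p)"
    by (simp add: map_pmf_def)
  finally show ?thesis .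
qed

lemma Pi_pmf_pair_pmf:
  assumes "finite A"
  shows "Pi_pmf A (da, db) (\<lambda>x. pair_pmf (P x) (R x)) =
         Pi_pmf A da P \<bind> (\<lambda>f. map_pmf (\<lambda>h x. if x \<in> A then (f x, h x) else (da, db)) (Pi_pmf A db R))"
proof -
  have "pair_pmf (P x) (R x) = P x \<bind> (\<lambda>a. map_pmf (Pair a) (R x))" for x
    by (simp add: pair_pmf_def map_pmf_def)
  then have "Pi_pmf A (da, db) (\<lambda>x. pair_pmf (P x) (R x)) =
        Pi_pmf A (da, db) (\<lambda>x. P x \<bind> (\<lambda>a. map_pmf (Pair a) (R x)))"
    by simp
  also have "\<dots> = Pi_pmf A da P \<bind> (\<lambda>f. Pi_pmf A (da, db) (\<lambda>x. map_pmf (Pair (f x)) (R x)))"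
    by (rule Pi_pmf_bind[OF assms])
  also have "\<dots> = Pi_pmf A da P \<bind> (\<lambda>f. map_pmf (\<lambda>h x. if x \<in> A then (f x, h x) else (da, db)) (Pi_pmf A db R))"
    by (simp add: Pi_pmf_map_dependent[OF assms, where d = db])
  finally show ?thesis .
qed

lemma prod_le_power_card_mult:
  fixes f g :: "'a \<Rightarrow> real"
  assumes "finite A" "\<And>x. x \<in> A \<Longrightarrow> 0 \<le> f x"
    and "\<And>x. x \<in> A \<Longrightarrow> f x \<le> (if x \<in> S then c else 1) * g x"
  shows "prod f A \<le> c ^ card (A \<inter> S) * prod g A"
proof -
  have "prod f A \<le> (\<Prod>x\<in>A. (if x \<in> S then c else 1) * g x)"
    using assms by (intro prod_mono) auto
  also have "\<dots> = (\<Prod>x\<in>A. if x \<in> S then c else 1) * prod g A"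
    by (rule prod.distrib)
  also have "(\<Prod>x\<in>A. if x \<in> S then c else 1) = c ^ card (A \<inter> S)"
    using assms(1) by (simp add: prod.If_cases Int_def)
  finally show ?thesis .
qed

lemma pmf_Pi_threshold_le:
  fixes \<theta> \<theta>' :: "'a \<Rightarrow> int"
  assumes A: "finite A" and e0: "e0 > 0"
    and close: "\<And>x. \<bar>\<theta> x - \<theta>' x\<bar> \<le> 1" and same: "\<And>x. x \<notin> S \<Longrightarrow> \<theta> x = \<theta>' x"
  shows "pmf (Pi_pmf A False (\<lambda>x. map_pmf (\<lambda>z. z \<le> \<theta> x) (dlap e0))) k
         \<le> exp e0 ^ card (A \<inter> S) * pmf (Pi_pmf A False (\<lambda>x. map_pmf (\<lambda>z. z \<le> \<theta>' x) (dlap e0))) k"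
proof (cases "\<forall>x. x \<notin> A \<longrightarrow> k x = False")
  case True
  have "(\<Prod>x\<in>A. pmf (map_pmf (\<lambda>z. z \<le> \<theta> x) (dlap e0)) (k x))
        \<le> exp e0 ^ card (A \<inter> S) * (\<Prod>x\<in>A. pmf (map_pmf (\<lambda>z. z \<le> \<theta>' x) (dlap e0)) (k x))"
  proof (rule prod_le_power_card_mult[OF A])
    fix x
    show "pmf (map_pmf (\<lambda>z. z \<le> \<theta> x) (dlap e0)) (k x)
          \<le> (if x \<in> S then exp e0 else 1) * pmf (map_pmf (\<lambda>z. z \<le> \<theta>' x) (dlap e0)) (k x)"
      using pmf_map_threshold_le[OF pmf_dlap_shift_le[OF e0] _ close] same[of x] by auto
  qed simp
  then show ?thesis using True A by (simp add: pmf_Pi)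
next
  case False
  then obtain x where "x \<notin> A" "k x" by auto
  then have "pmf (Pi_pmf A False (\<lambda>x. map_pmf (\<lambda>z. z \<le> \<theta> x) (dlap e0))) k = 0"
    using A by (intro pmf_Pi_outside) auto
  then show ?thesis by simp
qed

lemma integrable_pmf_bounded:
  fixes f :: "'a \<Rightarrow> real"
  assumes "\<And>x. \<bar>f x\<bar> \<le> B"
  shows "integrable (measure_pmf p) f"
  by (rule measure_pmf.integrable_const_bound[where B = B]) (use assms in auto)

lemma measure_pmf_prob_bind: "measure_pmf.prob (bind_pmf M N) X = (\<integral>x. measure_pmf.prob (N x) X \<partial>M)"
proof -
  have int: "integrable (measure_pmf M) (\<lambda>x. measure_pmf.prob (N x) X)"
    by (rule integrable_pmf_bounded[where B = 1]) auto
  have "ennreal (measure_pmf.prob (bind_pmf M N) X) = emeasure (measure_pmf (bind_pmf M N)) X"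
    by (simp add: measure_pmf.emeasure_eq_measure)
  also have "\<dots> = (\<integral>\<^sup>+x. emeasure (measure_pmf (N x)) X \<partial>M)" by simp
  also have "\<dots> = (\<integral>\<^sup>+x. ennreal (measure_pmf.prob (N x) X) \<partial>M)"
    by (simp add: measure_pmf.emeasure_eq_measure)
  also have "\<dots> = ennreal (\<integral>x. measure_pmf.prob (N x) X \<partial>M)"
    by (rule nn_integral_eq_integral[OF int]) auto
  finally show ?thesis by (simp add: integral_nonneg_AE)
qed

lemma integral_bind_pmf_bounded:
  fixes f :: "'a \<Rightarrow> real"
  assumes "\<And>x. \<bar>f x\<bar> \<le> B"
  shows "integral\<^sup>L (measure_pmf (bind_pmf M N)) f = (\<integral>x. integral\<^sup>L (measure_pmf (N x)) f \<partial>M)"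
  using measurable_measure_pmf[of N] assms
  unfolding measure_pmf_bind
  by (intro integral_bind[where K = "count_space UNIV" and B = B and B' = 1]) (auto intro: measure_pmf.finite_measure_axioms)

lemma integral_pair_pmf_mult:
  fixes f g :: "_ \<Rightarrow> real"
  assumes "\<And>x. \<bar>f x\<bar> \<le> B1" "\<And>y. \<bar>g y\<bar> \<le> B2"
  shows "(\<integral>z. f (fst z) * g (snd z) \<partial>measure_pmf (pair_pmf p q)) = (\<integral>x. f x \<partial>measure_pmf p) * (\<integral>y. g y \<partial>measure_pmf q)"
proof -
  have b: "\<bar>f (fst z) * g (snd z)\<bar> \<le> B1 * B2" for z
    unfolding abs_mult using assms by (intro mult_mono) (auto intro: order.trans[OF abs_ge_zero])
  have "(\<integral>z. f (fst z) * g (snd z) \<partial>measure_pmf (pair_pmf p q)) = (\<integral>x. (\<integral>z. f (fst z) * g (snd z) \<partial>measure_pmf (q \<bind> (\<lambda>y. return_pmf (x, y)))) \<partial>p)"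
    unfolding pair_pmf_def by (rule integral_bind_pmf_bounded[OF b])
  also have "\<dots> = (\<integral>x. (\<integral>y. f x * g y \<partial>q) \<partial>p)"
  proof (intro Bochner_Integration.integral_cong refl)
    fix x
    show "(\<integral>z. f (fst z) * g (snd z) \<partial>measure_pmf (q \<bind> (\<lambda>y. return_pmf (x, y)))) = (\<integral>y. f x * g y \<partial>q)"
      by (subst integral_bind_pmf_bounded[OF b]) (simp add: integral_return)
  qed
  also have "\<dots> = (\<integral>x. f x * (\<integral>y. g y \<partial>q) \<partial>p)" by simp
  also have "\<dots> = (\<integral>x. f x \<partial>p) * (\<integral>y. g y \<partial>q)" by simp
  finally show ?thesis .
qed

lemma integral_coin: "(\<integral>x. f x \<partial>measure_pmf coin) = (f True + f False) / (2::real)"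
  unfolding coin_def by (subst integral_pmf_of_set) (auto simp: UNIV_bool)

lemma map_pmf_eq_coin: "map_pmf (\<lambda>x. x = c) coin = coin"
proof -
  have "bij_betw (\<lambda>x. x = c) (UNIV :: bool set) UNIV"
    by (cases c) (auto simp: bij_betw_def inj_on_def image_def)
  then show ?thesis unfolding coin_def by (intro map_pmf_of_set_bij_betw) auto
qed

lemma map_pmf_fst_eq_coin: "map_pmf (\<lambda>y. fst y = c) (pair_pmf coin Y) = coin"
proof -
  have "map_pmf (\<lambda>y. fst y = c) (pair_pmf coin Y) = map_pmf (\<lambda>x. x = c) (map_pmf fst (pair_pmf coin Y))"
    by (simp add: map_pmf_comp)
  also have "\<dots> = coin" by (simp add: map_fst_pair_pmf map_pmf_eq_coin)
  finally show ?thesis .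
qed

lemma expectation_card_coins:
  fixes h :: "nat \<Rightarrow> real"
  assumes "finite N"
  shows "(\<integral>f. h (card {w \<in> N. f w}) \<partial>measure_pmf (Pi_pmf N dd (\<lambda>_. coin)))
         = (\<Sum>x\<le>card N. real (card N choose x) / 2 ^ card N * h x)"
proof -
  have "binomial_pmf (card N) (1/2) = map_pmf (\<lambda>f. card {x \<in> N. f x}) (Pi_pmf N dd (\<lambda>_. bernoulli_pmf (1/2)))"
    by (rule binomial_pmf_altdef') (use assms in auto)
  then have "(\<integral>f. h (card {w \<in> N. f w}) \<partial>measure_pmf (Pi_pmf N dd (\<lambda>_. coin))) = (\<integral>x. h x \<partial>measure_pmf (binomial_pmf (card N) (1/2)))"
    by (simp add: coin_def bernoulli_pmf_half_conv_pmf_of_set)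
  also have "\<dots> = (\<Sum>x\<le>card N. h x * pmf (binomial_pmf (card N) (1/2)) x)"
    by (rule integral_measure_pmf_real) auto
  also have "\<dots> = (\<Sum>x\<le>card N. real (card N choose x) / 2 ^ card N * h x)"
  proof (intro sum.cong refl)
    fix x assume "x \<in> {..card N}"
    then have "(1 / 2 :: real) ^ x * (1 / 2) ^ (card N - x) = 1 / 2 ^ card N"
      by (simp add: power_add[symmetric] power_divide)
    then show "h x * pmf (binomial_pmf (card N) (1/2)) x = real (card N choose x) / 2 ^ card N * h x"
      by (simp add: mult_ac)
  qed
  finally show ?thesis .
qed

lemma Pi_pmf_fst_eq_coin:
  assumes "finite R"
  shows "map_pmf (\<lambda>g w. if w \<in> R then fst (g w) = s w else False) (Pi_pmf R d (\<lambda>_. pair_pmf coin Y))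
         = Pi_pmf R False (\<lambda>_. coin)"
proof -
  have "Pi_pmf R False (\<lambda>w. map_pmf (\<lambda>y. fst y = s w) (pair_pmf coin Y))
        = map_pmf (\<lambda>g w. if w \<in> R then fst (g w) = s w else False) (Pi_pmf R d (\<lambda>_. pair_pmf coin Y))"
    by (rule Pi_pmf_map_dependent[OF assms])
  then show ?thesis by (simp only: map_pmf_fst_eq_coin)
qed

lemma expectation_disjoint_coin_counts:
  fixes h1 h2 :: "nat \<Rightarrow> real" and R :: "'a set"
  assumes fin: "finite R" and sub: "N1 \<subseteq> R" "N2 \<subseteq> R" and disj: "N1 \<inter> N2 = {}"
    and bd1: "\<And>x. \<bar>h1 x\<bar> \<le> B1" and bd2: "\<And>x. \<bar>h2 x\<bar> \<le> B2"
  shows "(\<integral>f. h1 (card {w \<in> N1. f w}) * h2 (card {w \<in> N2. f w}) \<partial>measure_pmf (Pi_pmf R False (\<lambda>_. coin)))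
         = (\<Sum>x\<le>card N1. real (card N1 choose x) / 2 ^ card N1 * h1 x) *
           (\<Sum>y\<le>card N2. real (card N2 choose y) / 2 ^ card N2 * h2 y)"
proof -
  have f1: "finite N1" "finite N2" using fin sub finite_subset by auto
  define I where "I f = h1 (card {w \<in> N1. f w}) * h2 (card {w \<in> N2. f w})" for f :: "'a \<Rightarrow> bool"
  have "(\<integral>f. I f \<partial>measure_pmf (Pi_pmf R False (\<lambda>_. coin)))
        = (\<integral>f. I f \<partial>measure_pmf (Pi_pmf (N1 \<union> N2) False (\<lambda>_. coin)))"
  proof -
    have "Pi_pmf (N1 \<union> N2) False (\<lambda>_. coin) =
          map_pmf (\<lambda>f x. if x \<in> N1 \<union> N2 then f x else False) (Pi_pmf R False (\<lambda>_. coin))"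
      by (rule Pi_pmf_subset) (use fin sub in auto)
    moreover have "I (\<lambda>x. if x \<in> N1 \<union> N2 then f x else False) = I f" for f
      unfolding I_def by (intro arg_cong2[where f = "\<lambda>x y. h1 x * h2 y"] arg_cong[where f = card]) auto
    ultimately show ?thesis by simp
  qed
  also have "\<dots> = (\<integral>z. h1 (card {w \<in> N1. fst z w}) * h2 (card {w \<in> N2. snd z w})
                     \<partial>measure_pmf (pair_pmf (Pi_pmf N1 False (\<lambda>_. coin)) (Pi_pmf N2 False (\<lambda>_. coin))))"
  proof -
    have "Pi_pmf (N1 \<union> N2) False (\<lambda>_. coin) = map_pmf (\<lambda>(f, g) x. if x \<in> N1 then f x else g x)
             (pair_pmf (Pi_pmf N1 False (\<lambda>_. coin)) (Pi_pmf N2 False (\<lambda>_. coin)))"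
      by (rule Pi_pmf_union) (use f1 disj in auto)
    moreover have "I ((\<lambda>(f, g) x. if x \<in> N1 then f x else g x) z)
                   = h1 (card {w \<in> N1. fst z w}) * h2 (card {w \<in> N2. snd z w})" for z
    proof -
      obtain f g where z: "z = (f, g)" by (cases z)
      have "{w \<in> N2. (if w \<in> N1 then f w else g w)} = {w \<in> N2. g w}" using disj by auto
      moreover have "{w \<in> N1. (if w \<in> N1 then f w else g w)} = {w \<in> N1. f w}" by auto
      ultimately show ?thesis unfolding I_def z by (simp only: case_prod_conv fst_conv snd_conv)
    qed
    ultimately show ?thesis by simp
  qed
  also have "\<dots> = (\<integral>f. h1 (card {w \<in> N1. f w}) \<partial>measure_pmf (Pi_pmf N1 False (\<lambda>_. coin))) *
                   (\<integral>g. h2 (card {w \<in> N2. g w}) \<partial>measure_pmf (Pi_pmf N2 False (\<lambda>_. coin)))"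
    by (rule integral_pair_pmf_mult) (rule bd1, rule bd2)
  also have "\<dots> = (\<Sum>x\<le>card N1. real (card N1 choose x) / 2 ^ card N1 * h1 x) *
                   (\<Sum>y\<le>card N2. real (card N2 choose y) / 2 ^ card N2 * h2 y)"
    using f1 by (simp add: expectation_card_coins)
  finally show ?thesis unfolding I_def .
qed

lemma expectation_disjoint_counts:
  fixes h1 h2 :: "nat \<Rightarrow> real" and d :: "bool \<times> 'b" and R :: "'a set"
  assumes fin: "finite R" and sub: "N1 \<subseteq> R" "N2 \<subseteq> R" and disj: "N1 \<inter> N2 = {}"
    and bd1: "\<And>x. \<bar>h1 x\<bar> \<le> B1" and bd2: "\<And>x. \<bar>h2 x\<bar> \<le> B2"
  shows "(\<integral>g. h1 (card {w \<in> N1. fst (g w) = a}) * h2 (card {w \<in> N2. fst (g w) = b})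
            \<partial>measure_pmf (Pi_pmf R d (\<lambda>_. pair_pmf coin Y)))
         = (\<Sum>x\<le>card N1. real (card N1 choose x) / 2 ^ card N1 * h1 x) *
           (\<Sum>y\<le>card N2. real (card N2 choose y) / 2 ^ card N2 * h2 y)"
proof -
  define F where "F g = (\<lambda>w. if w \<in> R then fst (g w) = (if w \<in> N1 then a else b) else False)"
    for g :: "'a \<Rightarrow> bool \<times> 'b"
  have "{w \<in> N1. fst (g w) = a} = {w \<in> N1. F g w}" "{w \<in> N2. fst (g w) = b} = {w \<in> N2. F g w}" for g
    using sub disj by (auto simp: F_def)
  then have "(\<integral>g. h1 (card {w \<in> N1. fst (g w) = a}) * h2 (card {w \<in> N2. fst (g w) = b})
              \<partial>measure_pmf (Pi_pmf R d (\<lambda>_. pair_pmf coin Y)))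
        = (\<integral>f. h1 (card {w \<in> N1. f w}) * h2 (card {w \<in> N2. f w})
              \<partial>measure_pmf (map_pmf F (Pi_pmf R d (\<lambda>_. pair_pmf coin Y))))"
    by simp
  also have "map_pmf F (Pi_pmf R d (\<lambda>_. pair_pmf coin Y)) = Pi_pmf R False (\<lambda>_. coin)"
    unfolding F_def by (rule Pi_pmf_fst_eq_coin[OF fin])
  also have "(\<integral>f. h1 (card {w \<in> N1. f w}) * h2 (card {w \<in> N2. f w}) \<partial>measure_pmf (Pi_pmf R False (\<lambda>_. coin)))
             = (\<Sum>x\<le>card N1. real (card N1 choose x) / 2 ^ card N1 * h1 x) *
               (\<Sum>y\<le>card N2. real (card N2 choose y) / 2 ^ card N2 * h2 y)"
    by (rule expectation_disjoint_coin_counts[OF fin sub disj bd1 bd2])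
  finally show ?thesis .
qed

lemma Pi_pmf_insert_pair:
  assumes "finite R" "u \<notin> R" "v \<notin> R" "u \<noteq> v"
  shows "Pi_pmf (insert u (insert v R)) d (\<lambda>_. Q) =
         Pi_pmf R d (\<lambda>_. Q) \<bind> (\<lambda>g. Q \<bind> (\<lambda>yu. Q \<bind> (\<lambda>yv. return_pmf ((g(v := yv))(u := yu)))))"
proof -
  have "Pi_pmf (insert u (insert v R)) d (\<lambda>_. Q) = Q \<bind> (\<lambda>yu. Pi_pmf (insert v R) d (\<lambda>_. Q) \<bind> (\<lambda>f. return_pmf (f(u := yu))))"
    using assms by (subst Pi_pmf_insert') auto
  also have "\<dots> = Q \<bind> (\<lambda>yu. Q \<bind> (\<lambda>yv. Pi_pmf R d (\<lambda>_. Q) \<bind> (\<lambda>g. return_pmf ((g(v := yv))(u := yu)))))"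
    using assms by (subst Pi_pmf_insert') (auto simp: bind_assoc_pmf bind_return_pmf)
  also have "\<dots> = Pi_pmf R d (\<lambda>_. Q) \<bind> (\<lambda>g. Q \<bind> (\<lambda>yu. Q \<bind> (\<lambda>yv. return_pmf ((g(v := yv))(u := yu)))))"
    by (simp add: bind_commute_pmf[of Q "Pi_pmf R d (\<lambda>_. Q)"])
  finally show ?thesis .
qed

lemma bind_pair_pmf_assoc: "pair_pmf coin (pair_pmf coin D) \<bind> F = coin \<bind> (\<lambda>a1. coin \<bind> (\<lambda>a2. D \<bind> (\<lambda>z. F (a1, a2, z))))"
  by (simp add: pair_pmf_def bind_assoc_pmf bind_return_pmf)

definition cdf_int :: "int pmf \<Rightarrow> int \<Rightarrow> real" where "cdf_int D t = measure_pmf.prob D {z. z \<le> t}"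

lemma cdf_int_nonneg: "cdf_int D t \<ge> 0" unfolding cdf_int_def by simp

lemma cdf_int_le_1: "cdf_int D t \<le> 1" unfolding cdf_int_def by simp

lemma cdf_int_abs_le_1: "\<bar>cdf_int D t\<bar> \<le> 1"
  using cdf_int_nonneg[of D t] cdf_int_le_1[of D t] by simp

lemma cdf_int_mono: "s \<le> t \<Longrightarrow> cdf_int D s \<le> cdf_int D t"
  unfolding cdf_int_def by (intro measure_pmf.finite_measure_mono) auto

lemma cdf_int_diff: "cdf_int D t - cdf_int D (t - 1) = pmf D t"
proof -
  have "{z. z \<le> t} = {z. z \<le> t - 1} \<union> {t}" by auto
  then have "cdf_int D t = measure_pmf.prob D ({z. z \<le> t - 1} \<union> {t})" unfolding cdf_int_def by simp
  also have "\<dots> = cdf_int D (t - 1) + measure_pmf.prob D {t}"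
    unfolding cdf_int_def by (rule measure_pmf.finite_measure_Union) auto
  finally show ?thesis by (simp add: measure_pmf_single)
qed

lemma integral_threshold:
  "(\<integral>z. f (z \<le> t) \<partial>measure_pmf D) = cdf_int D t * f True + (1 - cdf_int D t) * (f False :: real)"
proof -
  have eq: "f (z \<le> t) = f False + (f True - f False) * indicator {z. z \<le> t} z" for z
    by (auto simp: indicator_def)
  have "(\<integral>z. f (z \<le> t) \<partial>measure_pmf D) = (\<integral>z. f False + (f True - f False) * indicator {z. z \<le> t} z \<partial>measure_pmf D)"
    unfolding eq ..
  also have "\<dots> = f False + (f True - f False) * cdf_int D t"
  proof -
    have i1: "integrable (measure_pmf D) (\<lambda>z. indicator {z. z \<le> t} z :: real)"
      by (rule integrable_pmf_bounded[where B = 1]) (auto simp: indicator_def)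
    have "(\<integral>z. f False + (f True - f False) * indicator {z. z \<le> t} z \<partial>measure_pmf D)
          = (\<integral>z. f False \<partial>measure_pmf D) + (\<integral>z. (f True - f False) * indicator {z. z \<le> t} z \<partial>measure_pmf D)"
      using i1 by (intro Bochner_Integration.integral_add) auto
    also have "(\<integral>z. (f True - f False) * indicator {z. z \<le> t} z \<partial>measure_pmf D) = (f True - f False) * (\<integral>z. indicator {z. z \<le> t} z \<partial>measure_pmf D)"
      by (rule integral_mult_right_zero)
    also have "(\<integral>z. indicator {z. z \<le> t} z \<partial>measure_pmf D) = cdf_int D t"
      unfolding cdf_int_def by simp
    finally show ?thesis by simp
  qed
  finally show ?thesis by (simp add: algebra_simps)
qed

lemma integral_threshold_if:
  fixes g :: "bool \<Rightarrow> real"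
  shows "(\<integral>zu. g (if zu \<le> s then a1 else a2) \<partial>measure_pmf D) = cdf_int D s * g a1 + (1 - cdf_int D s) * g a2"
  using integral_threshold[where f = "\<lambda>k. g (if k then a1 else a2)" and t = s and D = D] by simp

lemma simple_graph_edgeD:
  assumes "simple_graph n E" "{u, v} \<in> E"
  shows "u < n" "v < n" "u \<noteq> v"
proof -
  from assms obtain x y where xy: "{u, v} = {x, y}" "x \<noteq> y" "x < n" "y < n"
    unfolding simple_graph_def by blast
  then show "u < n" "v < n" "u \<noteq> v" by (auto simp: doubleton_eq_iff)
qed

lemma finite_neighbours:
  assumes "simple_graph n E"
  shows "finite {u. {u, v} \<in> E \<and> P u}"
  by (rule finite_subset[of _ "{..<n}"]) (use simple_graph_edgeD[OF assms] in auto)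

lemma edge_neighborsE:
  assumes "edge_neighbors n E E'"
  obtains a b where "a \<noteq> b" "E' = insert {a, b} E" "{a, b} \<notin> E" "simple_graph n E"
    | a b where "a \<noteq> b" "E = insert {a, b} E'" "{a, b} \<notin> E'" "simple_graph n E'"
proof -
  from assms have sg: "simple_graph n E" "simple_graph n E'"
    and "card ((E - E') \<union> (E' - E)) = 1"
    unfolding edge_neighbors_def by auto
  then obtain e where e: "(E - E') \<union> (E' - E) = {e}" by (auto simp: card_Suc_eq)
  then have e_in: "e \<in> (E - E') \<union> (E' - E)" and e_unique: "\<And>x. x \<in> (E - E') \<union> (E' - E) \<Longrightarrow> x = e"
    by auto
  show ?thesis
  proof (cases "e \<in> E")
    case True
    then have "E = insert e E'" "e \<notin> E'" using e_in e_unique by auto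
    moreover from True sg(1) obtain a b where "e = {a, b}" "a \<noteq> b"
      unfolding simple_graph_def by blast
    ultimately show ?thesis using that(2)[of a b] sg(2) by simp
  next
    case False
    then have "E' = insert e E" "e \<notin> E" "e \<in> E'" using e_in e_unique by auto
    moreover from \<open>e \<in> E'\<close> sg(2) obtain a b where "e = {a, b}" "a \<noteq> b"
      unfolding simple_graph_def by blast
    ultimately show ?thesis using that(1)[of a b] sg(1) by simp
  qed
qed

definition other_nbrs :: "nat set set \<Rightarrow> nat \<Rightarrow> nat \<Rightarrow> nat set" where
  "other_nbrs E u v = {w. {w, u} \<in> E} - {v}"

lemma degree_other_nbrs:
  assumes sg: "simple_graph n E" and uv: "{u, v} \<in> E"
  shows "degree E u = card (other_nbrs E u v) + 1" "other_nbrs E u v \<subseteq> {..<n} - {u, v}"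
proof -
  have fin: "finite {w. {w, u} \<in> E}" using finite_neighbours[OF sg, of u "\<lambda>_. True"] by simp
  have vin: "v \<in> {w. {w, u} \<in> E}" using uv by (simp add: insert_commute)
  show "degree E u = card (other_nbrs E u v) + 1"
  proof -
    have "card {w. {w, u} \<in> E} > 0" using fin vin by (auto simp: card_gt_0_iff)
    then show ?thesis unfolding degree_def other_nbrs_def using fin vin by (simp add: card_Diff_singleton)
  qed
  show "other_nbrs E u v \<subseteq> {..<n} - {u, v}"
  proof
    fix w assume "w \<in> other_nbrs E u v"
    then have w: "{w, u} \<in> E" "w \<noteq> v" unfolding other_nbrs_def by auto
    then show "w \<in> {..<n} - {u, v}" using simple_graph_edgeD[OF sg w(1)] by auto
  qed
qed

lemma other_nbrs_disjoint:
  assumes tf: "triangle_free E" and uv: "{u, v} \<in> E"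
  shows "other_nbrs E u v \<inter> other_nbrs E v u = {}"
proof (rule ccontr)
  assume "other_nbrs E u v \<inter> other_nbrs E v u \<noteq> {}"
  then obtain w where "{w, u} \<in> E" "{w, v} \<in> E" unfolding other_nbrs_def by auto
  then have "{u, v} \<in> E \<and> {v, w} \<in> E \<and> {u, w} \<in> E" using uv by (simp add: insert_commute)
  then show False using tf unfolding triangle_free_def by blast
qed

section \<open>Privacy\<close>

definition half_degree :: "nat set set \<Rightarrow> nat \<Rightarrow> int" where
  "half_degree E u = \<lceil>(real (degree E u) - 1) / 2\<rceil>"

text \<open>Vertex v keeps its first colour c1 v iff its noise is at most this threshold.\<close>

definition keep_threshold :: "nat set set \<Rightarrow> (nat \<Rightarrow> bool) \<Rightarrow> nat \<Rightarrow> int" where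
  "keep_threshold E c1 v = half_degree E v - int (card {u. {u, v} \<in> E \<and> c1 u = c1 v})"

lemma alg_output_keep_threshold:
  "alg_output n E c1 c2 z = {v. v < n \<and> (if z v \<le> keep_threshold E c1 v then c1 v else c2 v)}"
  unfolding alg_output_def keep_threshold_def half_degree_def Let_def
  by (intro Collect_cong) (auto simp: algebra_simps)

lemma alg_coins_then_noise:
  "alg eps n E =
     Pi_pmf {..<n} False (\<lambda>_. coin) \<bind> (\<lambda>f1. Pi_pmf {..<n} False (\<lambda>_. coin) \<bind> (\<lambda>f2.
       map_pmf (\<lambda>z. alg_output n E (\<lambda>v. if v < n then f1 v else False) (\<lambda>v. if v < n then f2 v else False)
                  (\<lambda>v. if v < n then z v else 0))
         (Pi_pmf {..<n} 0 (\<lambda>_. dlap (eps / 2)))))"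
  unfolding alg_def
  by (simp add: Pi_pmf_pair_pmf[where da = False and db = "(False, 0)"]
                Pi_pmf_pair_pmf[where da = False and db = 0] map_bind_pmf map_pmf_comp
                if_distrib[of fst] if_distrib[of snd] cong: if_cong)

lemma keep_threshold_insert_edge:
  assumes sg: "simple_graph n E" and E': "E' = insert {a, b} E" "{a, b} \<notin> E"
  shows "\<bar>keep_threshold E' c a - keep_threshold E c a\<bar> \<le> 1"
proof -
  let ?N = "{u. {u, a} \<in> E}" and ?L = "{u. {u, a} \<in> E \<and> c u = c a}"
  have fin: "finite ?N" "finite ?L"
    using finite_neighbours[OF sg, where P = "\<lambda>_. True"] finite_neighbours[OF sg] by auto
  have "b \<notin> ?N" using E' by (auto simp: insert_commute)
  moreover have "{u. {u, a} \<in> E'} = insert b ?N"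
    using E' by (auto simp: doubleton_eq_iff insert_commute)
  moreover have "{u. {u, a} \<in> E' \<and> c u = c a} = (if c b = c a then insert b ?L else ?L)"
    using E' by (auto simp: doubleton_eq_iff insert_commute)
  ultimately have "degree E' a = degree E a + 1"
    and "int (card {u. {u, a} \<in> E' \<and> c u = c a}) - int (card ?L) \<in> {0, 1}"
    using fin unfolding degree_def by auto
  moreover have "\<lceil>(real (degree E a) - 1) / 2\<rceil> \<le> \<lceil>(real (degree E a) + 1 - 1) / 2\<rceil>"
    and "\<lceil>(real (degree E a) + 1 - 1) / 2\<rceil> \<le> \<lceil>(real (degree E a) - 1) / 2 + 1\<rceil>"
    by (intro ceiling_mono; simp add: field_simps)+
  ultimately show ?thesis unfolding keep_threshold_def half_degree_def by auto
qed

lemma keep_threshold_edge_neighbors: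
  assumes "edge_neighbors n E E'"
  obtains a b where "\<And>c v. \<bar>keep_threshold E' c v - keep_threshold E c v\<bar> \<le> 1"
    and "\<And>c v. v \<notin> {a, b} \<Longrightarrow> keep_threshold E' c v = keep_threshold E c v"
proof -
  have *: "\<bar>keep_threshold F' c v - keep_threshold F c v\<bar> \<le> 1"
    "v \<notin> {a, b} \<Longrightarrow> keep_threshold F' c v = keep_threshold F c v"
    if "simple_graph n F" "F' = insert {a, b} F" "{a, b} \<notin> F" for F F' a b c v
  proof -
    have nb: "{u, v} \<in> F' \<longleftrightarrow> {u, v} \<in> F" if "v \<notin> {a, b}" for u
      using that \<open>F' = insert {a, b} F\<close> by (auto simp: doubleton_eq_iff)
    then show "v \<notin> {a, b} \<Longrightarrow> keep_threshold F' c v = keep_threshold F c v"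
      unfolding keep_threshold_def half_degree_def degree_def by simp
    have "F' = insert {b, a} F" "{b, a} \<notin> F" using that by (auto simp: insert_commute)
    then show "\<bar>keep_threshold F' c v - keep_threshold F c v\<bar> \<le> 1"
      using keep_threshold_insert_edge[OF that] keep_threshold_insert_edge[OF that(1)]
        nb[of _] unfolding keep_threshold_def half_degree_def degree_def by (cases "v \<in> {a, b}") auto
  qed
  from assms show ?thesis
  proof (cases rule: edge_neighborsE)
    case (1 a b)
    then show ?thesis using that[of a b] *[of E E' a b] by blast
  next
    case (2 a b)
    then show ?thesis using that[of a b] *[of E' E a b] by (simp add: abs_minus_commute)
  qed
qed

lemma alg_noise_privacy:
  assumes eps: "eps > 0"
    and close: "\<And>v. \<bar>keep_threshold E' c1 v - keep_threshold E c1 v\<bar> \<le> 1"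
    and same: "\<And>v. v \<notin> {a, b} \<Longrightarrow> keep_threshold E' c1 v = keep_threshold E c1 v"
  shows "measure_pmf.prob (map_pmf (\<lambda>z. alg_output n E c1 c2 (\<lambda>v. if v < n then z v else 0))
                             (Pi_pmf {..<n} 0 (\<lambda>_. dlap (eps / 2)))) T
         \<le> exp eps * measure_pmf.prob (map_pmf (\<lambda>z. alg_output n E' c1 c2 (\<lambda>v. if v < n then z v else 0))
                             (Pi_pmf {..<n} 0 (\<lambda>_. dlap (eps / 2)))) T"
proof -
  define bits where "bits F = Pi_pmf {..<n} False (\<lambda>v. map_pmf (\<lambda>z. z \<le> keep_threshold F c1 v) (dlap (eps / 2)))"
    for F
  define out where "out k = {v. v < n \<and> (if k v then c1 v else c2 v)}" for k :: "nat \<Rightarrow> bool"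
  have law: "map_pmf (\<lambda>z. alg_output n F c1 c2 (\<lambda>v. if v < n then z v else 0)) (Pi_pmf {..<n} 0 (\<lambda>_. dlap (eps / 2)))
             = map_pmf out (bits F)" for F
    unfolding bits_def Pi_pmf_map_dependent[OF finite_lessThan, where d = 0]
    by (simp add: map_pmf_comp out_def alg_output_keep_threshold)
  have "pmf (bits E) k \<le> exp eps * pmf (bits E') k" for k
  proof -
    have "pmf (bits E) k \<le> exp (eps / 2) ^ card ({..<n} \<inter> {a, b}) * pmf (bits E') k"
      unfolding bits_def using eps close same
      by (intro pmf_Pi_threshold_le) (auto simp: abs_minus_commute)
    also have "\<dots> \<le> exp (eps / 2) ^ 2 * pmf (bits E') k"
    proof (intro mult_right_mono power_increasing)
      show "card ({..<n} \<inter> {a, b}) \<le> 2"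
        using card_mono[of "{a, b}" "{..<n} \<inter> {a, b}"] by (cases "a = b") auto
    qed (use eps in auto)
    also have "exp (eps / 2) ^ 2 = exp eps" by (simp add: exp_double[symmetric])
    finally show ?thesis .
  qed
  then show ?thesis
    unfolding law measure_map_pmf by (intro measure_pmf_prob_le_pointwise) auto
qed

lemma alg_differential_privacy:
  assumes eps: "eps > 0" and nb: "edge_neighbors n E E'"
  shows "measure_pmf.prob (alg eps n E) T \<le> exp eps * measure_pmf.prob (alg eps n E') T"
proof -
  obtain a b where close: "\<And>c v. \<bar>keep_threshold E' c v - keep_threshold E c v\<bar> \<le> 1"
    and same: "\<And>c v. v \<notin> {a, b} \<Longrightarrow> keep_threshold E' c v = keep_threshold E c v"
    using keep_threshold_edge_neighbors[OF nb] by blast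
  show ?thesis
    unfolding alg_coins_then_noise
    by (intro measure_pmf_bind_le alg_noise_privacy[OF eps close same]) auto
qed

section \<open>Binomial coefficients near the middle\<close>

lemma central_binomial_sq_lower: "real ((2 * n) choose n) ^ 2 * (4 * n + 1) \<ge> 16 ^ n"
proof (induction n)
  case 0
  then show ?case by simp
next
  case (Suc n)
  define X Y where "X = real ((2 * n) choose n)" and "Y = real ((2 * n + 2) choose (n + 1))"
  have "(n + 1) * ((2 * n + 2) choose (n + 1)) = 2 * (2 * n + 1) * ((2 * n) choose n)"
    by (smt (verit) arith_special(3) binomial_absorb_comp choose_mult_lemma choose_one
        comm_monoid_mult_class.mult_1 comm_semiring_class.distrib diff_add_inverse2 mult.commute
        nat_add_1_add_1)
  then have "(real n + 1) * Y = 2 * (2 * real n + 1) * X"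
    unfolding X_def Y_def by (metis (mono_tags, lifting) of_nat_1 of_nat_add of_nat_mult of_nat_numeral)
  then have YX: "(real n + 1) ^ 2 * Y ^ 2 = 4 * (2 * real n + 1) ^ 2 * X ^ 2"
    by (metis power_mult_distrib mult.assoc power2_eq_square numeral_Bit0 numeral_One mult_2)
  have "(2 * real n + 2) ^ 2 * (4 * real n + 1) \<le> (2 * real n + 1) ^ 2 * (4 * real n + 5)"
    by (simp add: power2_eq_square algebra_simps)
  then have "(2 * real n + 2) ^ 2 * (4 * real n + 1) * (4 * X ^ 2)
             \<le> (2 * real n + 1) ^ 2 * (4 * real n + 5) * (4 * X ^ 2)"
    by (intro mult_right_mono) auto
  then have "(real n + 1) ^ 2 * (16 * (X ^ 2 * (4 * real n + 1)))
             \<le> (real n + 1) ^ 2 * (Y ^ 2 * (4 * real n + 5))"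
    by (simp only: mult.assoc[symmetric] YX) (simp add: power2_eq_square algebra_simps)
  then have "16 * (X ^ 2 * (4 * real n + 1)) \<le> Y ^ 2 * (4 * real n + 5)"
    by (rule mult_left_le_imp_le) simp
  moreover have "16 ^ n \<le> X ^ 2 * (4 * real n + 1)"
    using Suc.IH unfolding X_def by (simp add: add.commute)
  ultimately have "16 ^ Suc n \<le> Y ^ 2 * (4 * real n + 5)" by simp
  then show ?case unfolding Y_def by (simp add: algebra_simps)
qed

lemma middle_binomial_sq_lower: "real (m choose ((m + 1) div 2)) ^ 2 * (2 * m + 3) \<ge> 4 ^ m"
proof (cases "even m")
  case True
  then obtain n where m: "m = 2 * n" by (auto elim: evenE)
  have "(4::real) ^ m = 16 ^ n" unfolding m by (simp add: power_mult)
  also have "\<dots> \<le> real ((2 * n) choose n) ^ 2 * (4 * n + 1)" by (rule central_binomial_sq_lower)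
  also have "\<dots> \<le> real ((2 * n) choose n) ^ 2 * (2 * m + 3)" by (intro mult_left_mono) (auto simp: m)
  finally show ?thesis unfolding m by simp
next
  case False
  then obtain n where m: "m = 2 * n + 1" by (auto elim: oddE)
  have "(2 * n + 1) choose n = (2 * n + 1) choose (n + 1)"
    using binomial_symmetric[of n "2 * n + 1"] by (simp add: Suc_diff_le)
  then have "(2 * (n + 1)) choose (n + 1) = 2 * (m choose ((m + 1) div 2))"
    unfolding m by simp
  have "4 * 4 ^ m = (16::real) ^ (n + 1)" unfolding m by (simp add: power_mult)
  also have "\<dots> \<le> real ((2 * (n + 1)) choose (n + 1)) ^ 2 * (4 * real (n + 1) + 1)"
    using central_binomial_sq_lower[of "n + 1"] by simp
  also have "\<dots> = 4 * (real (m choose ((m + 1) div 2)) ^ 2 * (2 * m + 3))"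
    unfolding \<open>(2 * (n + 1)) choose (n + 1) = _\<close> unfolding m by (simp add: power2_eq_square algebra_simps)
  finally show ?thesis by simp
qed

lemma middle_binomial_prob_ge:
  "1 \<le> 2 * sqrt (real m + 1) * (real (m choose ((m + 1) div 2)) / 2 ^ m)"
proof -
  define P where "P = real (m choose ((m + 1) div 2)) / 2 ^ m"
  have "(4::real) ^ m = 2 ^ m * 2 ^ m" by (simp flip: power_mult_distrib)
  then have "P ^ 2 * (2 * real m + 3) = real (m choose ((m + 1) div 2)) ^ 2 * (2 * m + 3) / 4 ^ m"
    unfolding P_def by (simp add: power2_eq_square)
  also have "\<dots> \<ge> 1" using middle_binomial_sq_lower[of m] by simp
  finally have "1 \<le> P ^ 2 * (2 * real m + 3)" .
  also have "\<dots> \<le> P ^ 2 * (4 * (real m + 1))" by (intro mult_left_mono) auto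
  also have "\<dots> = (2 * sqrt (real m + 1) * P) ^ 2" by (simp add: power_mult_distrib)
  finally have "1 ^ 2 \<le> (2 * sqrt (real m + 1) * P) ^ 2" by simp
  then show ?thesis unfolding P_def by (rule power2_le_imp_le) simp
qed

lemma binomial_mult_pred: "0 < k \<Longrightarrow> k * (m choose k) = (m - (k - 1)) * (m choose (k - 1))"
  using times_binomial_minus1_eq[of k m] binomial_absorb_comp[of m "k - 1"] by simp

lemma binomial_ratio_step:
  fixes m T J k :: nat
  assumes "m \<le> 2 * T" "2 * T \<le> m + 1" "k \<le> T" "T < k + J" "0 < k"
  shows "real (m choose (k - 1)) \<ge> real (m choose k) * (1 - 4 * real J / (real m + 1))"
proof -
  have km: "k \<le> m" using assms by linarith
  have id: "real k * real (m choose k) = real (m - (k - 1)) * real (m choose (k - 1))"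
    using binomial_mult_pred[OF assms(5), of m] by (metis of_nat_mult)
  have mk: "real (m - (k - 1)) = real m - real k + 1" using km assms(5) by (simp add: of_nat_diff)
  define a where "a = real m - real k + 1"
  have apos: "a > 0" using km unfolding a_def by simp
  have "2 * k \<le> m + 1" using assms by linarith
  then have "real (2 * k) \<le> real (m + 1)" by (simp only: of_nat_le_iff)
  then have a2: "2 * a \<ge> real m + 1" unfolding a_def by simp
  have "m + 1 \<le> 2 * k + 2 * J" using assms by linarith
  then have "real (m + 1) \<le> real (2 * k + 2 * J)" by (simp only: of_nat_le_iff)
  then have b: "real m + 1 - 2 * real k \<le> 2 * real J" by simp
  have J0: "real J \<ge> 0" by simp
  have "4 * real J * a \<ge> 2 * real J * (real m + 1)"
    using mult_left_mono[OF a2, of "2 * real J"] by (simp add: algebra_simps)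
  moreover have "(real m + 1) * (real m + 1 - 2 * real k) \<le> (real m + 1) * (2 * real J)"
    using b by (intro mult_left_mono) auto
  ultimately have key: "real k * (real m + 1) \<ge> a * (real m + 1 - 4 * real J)"
    unfolding a_def by (simp add: algebra_simps)
  have "real k / a \<ge> 1 - 4 * real J / (real m + 1)"
    using key apos by (simp add: field_simps)
  then have "real (m choose k) * (1 - 4 * real J / (real m + 1)) \<le> real (m choose k) * (real k / a)"
    by (intro mult_left_mono) auto
  also have "real (m choose k) * (real k / a) = real (m choose (k - 1))"
    using id apos unfolding mk a_def[symmetric] by (simp add: field_simps)
  finally show ?thesis .
qed

lemma binomial_near_middle:
  fixes m T J j :: nat
  assumes T: "m \<le> 2 * T" "2 * T \<le> m + 1" and J: "9 * J ^ 2 \<le> m + 1" and j: "j \<le> J"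
  shows "real (m choose (T - j)) \<ge> real (m choose T) * (1 - real j * (4 * real J / (real m + 1)))"
  using j
proof (induction j)
  case 0 then show ?case by simp
next
  case (Suc j)
  define d where "d = 4 * real J / (real m + 1)"
  have JT: "J \<le> T"
  proof (cases "J = 0")
    case False
    then have "J \<le> J ^ 2" by (simp add: power2_eq_square)
    then show ?thesis using J T False by linarith
  qed simp
  have d1: "d \<le> 1"
  proof (cases "J = 0")
    case False
    then have "4 * J \<le> 4 * J ^ 2" by (simp add: power2_eq_square)
    then have "4 * real J \<le> real m + 1" using J by linarith
    then show ?thesis unfolding d_def by simp
  qed (simp add: d_def)
  have d0: "d \<ge> 0" unfolding d_def by simp
  have IH: "real (m choose (T - j)) \<ge> real (m choose T) * (1 - real j * d)"
    using Suc by (simp add: d_def)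
  have step: "real (m choose (T - j - 1)) \<ge> real (m choose (T - j)) * (1 - d)"
    unfolding d_def by (rule binomial_ratio_step) (use T Suc.prems JT in auto)
  have "real (m choose T) * (1 - real (Suc j) * d) \<le> real (m choose T) * ((1 - real j * d) * (1 - d))"
    by (intro mult_left_mono) (auto simp: algebra_simps d0)
  also have "\<dots> = (real (m choose T) * (1 - real j * d)) * (1 - d)" by simp
  also have "\<dots> \<le> real (m choose (T - j)) * (1 - d)"
    using IH d1 by (intro mult_right_mono) auto
  also have "\<dots> \<le> real (m choose (T - Suc j))" using step by simp
  finally show ?case by (simp add: d_def)
qed

lemma binomial_near_middle_ge_half:
  fixes m T J j :: nat
  assumes T: "m \<le> 2 * T" "2 * T \<le> m + 1" and J: "9 * J ^ 2 \<le> m + 1" and j: "j \<le> J"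
  shows "2 * real (m choose (T - j)) \<ge> real (m choose T)"
proof -
  have "real j * (4 * real J / (real m + 1)) \<le> real J * (4 * real J / (real m + 1))"
    using j by (intro mult_right_mono) auto
  also have "\<dots> = 4 * (real J ^ 2) / (real m + 1)" by (simp add: power2_eq_square)
  also have "\<dots> \<le> 1 / 2"
  proof -
    have "real (9 * J ^ 2) \<le> real (m + 1)" using J by (simp only: of_nat_le_iff)
    then have "9 * real J ^ 2 \<le> real m + 1" by simp
    then show ?thesis by (simp add: field_simps)
  qed
  finally have "1 - real j * (4 * real J / (real m + 1)) \<ge> 1 / 2" by simp
  then have "real (m choose T) * (1 / 2) \<le> real (m choose T) * (1 - real j * (4 * real J / (real m + 1)))"
    by (intro mult_left_mono) auto
  also have "\<dots> \<le> real (m choose (T - j))" by (rule binomial_near_middle[OF T J j])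
  finally show ?thesis by simp
qed

lemma sum_binomial_upto_half_ge:
  shows "2 * (\<Sum>x\<le>(m + 1) div 2. real (m choose x)) \<ge> 2 ^ m"
proof -
  define T where "T = (m + 1) div 2"
  have Tm: "T \<le> m" "m \<le> 2 * T" unfolding T_def by linarith+
  have cover: "{..m} \<subseteq> {..T} \<union> {m - T..m}" using Tm by auto
  have "(2::real) ^ m = (\<Sum>x\<le>m. real (m choose x))"
    using choose_row_sum[of m] by (metis of_nat_numeral of_nat_power of_nat_sum)
  also have "\<dots> \<le> (\<Sum>x\<in>{..T} \<union> {m - T..m}. real (m choose x))"
    using cover by (intro sum_mono2) auto
  also have "\<dots> \<le> (\<Sum>x\<le>T. real (m choose x)) + (\<Sum>x\<in>{m - T..m}. real (m choose x))"
  proof -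
    have "(\<Sum>x\<in>{..T} \<inter> {m - T..m}. real (m choose x)) \<ge> 0" by (rule sum_nonneg) auto
    then show ?thesis by (subst sum_Un) auto
  qed
  also have "(\<Sum>x\<in>{m - T..m}. real (m choose x)) = (\<Sum>x\<le>T. real (m choose x))"
  proof -
    have bij: "bij_betw (\<lambda>x. m - x) {..T} {m - T..m}"
      using Tm by (intro bij_betwI[where g = "\<lambda>x. m - x"]) auto
    have "(\<Sum>x\<in>{m - T..m}. real (m choose x)) = (\<Sum>x\<le>T. real (m choose (m - x)))"
      by (rule sum.reindex_bij_betw[OF bij, symmetric])
    also have "\<dots> = (\<Sum>x\<le>T. real (m choose x))"
      using Tm by (intro sum.cong refl) (auto simp: binomial_symmetric[symmetric])
    finally show ?thesis .
  qed
  finally show ?thesis unfolding T_def by simp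
qed

lemma ceiling_half_nat: "\<lceil>(real (m + 1) - 1) / 2\<rceil> = int ((m + 1) div 2)"
proof -
  have "(real (m + 1) - 1) / 2 = real m / 2" by simp
  moreover have "\<lceil>real m / 2\<rceil> = int ((m + 1) div 2)"
  proof (cases "even m")
    case True
    then obtain k where "m = 2 * k" by (auto elim: evenE)
    then show ?thesis by simp
  next
    case False
    then obtain k where m: "m = 2 * k + 1" by (auto elim: oddE)
    have "\<lceil>real m / 2\<rceil> = int k + 1"
      unfolding m by (intro ceiling_unique) (auto simp: field_simps)
    moreover have "(m + 1) div 2 = k + 1" unfolding m by simp
    ultimately show ?thesis by simp
  qed
  ultimately show ?thesis by simp
qed

section \<open>The tie probability\<close>

text \<open>For X ~ Bin(m, 1/2) and \<zeta> ~ DLap(1/e0) this is the probability that X + \<zeta> = \<lceil>m/2\<rceil>,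
  i.e. that a vertex with m + 1 neighbours sits exactly at its keep threshold, so that one more
  neighbour of the same colour changes its decision.\<close>

definition tie_prob :: "real \<Rightarrow> nat \<Rightarrow> real" where
  "tie_prob e0 m = (\<Sum>x\<le>m. real (m choose x) / 2 ^ m * pmf (dlap e0) (int ((m + 1) div 2) - int x))"

lemma tie_prob_nonneg: "tie_prob e0 m \<ge> 0"
  unfolding tie_prob_def by (intro sum_nonneg) auto

lemma tie_prob_ge_window:
  fixes J m :: nat
  assumes J: "9 * J ^ 2 \<le> m + 1"
  shows "real (m choose ((m + 1) div 2)) / 2 ^ m / 2 * (\<Sum>j\<le>J. pmf (dlap e0) (int j)) \<le> tie_prob e0 m"
proof -
  define T where "T = (m + 1) div 2"
  define f where "f x = real (m choose x) / 2 ^ m * pmf (dlap e0) (int T - int x)" for x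
  have T: "m \<le> 2 * T" "2 * T \<le> m + 1" "T \<le> m" unfolding T_def by linarith+
  have "J \<le> J ^ 2" by (simp add: power2_eq_square)
  then have JT: "J \<le> T" using J T by linarith
  then have inj: "inj_on (\<lambda>j. T - j) {..J}" by (auto simp: inj_on_def)
  have "real (m choose T) / 2 ^ m / 2 * (\<Sum>j\<le>J. pmf (dlap e0) (int j)) \<le> (\<Sum>j\<le>J. f (T - j))"
    unfolding sum_distrib_left
  proof (intro sum_mono)
    fix j assume j: "j \<in> {..J}"
    then have "real (m choose T) / 2 ^ m / 2 \<le> real (m choose (T - j)) / 2 ^ m"
      using binomial_near_middle_ge_half[OF T(1,2) J, of j] by (simp add: field_simps)
    from mult_right_mono[OF this pmf_nonneg[of "dlap e0" "int j"]]
    show "real (m choose T) / 2 ^ m / 2 * pmf (dlap e0) (int j) \<le> f (T - j)"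
      using j JT unfolding f_def by (simp add: of_nat_diff)
  qed
  also have "\<dots> = (\<Sum>x\<in>(\<lambda>j. T - j) ` {..J}. f x)"
    by (simp add: sum.reindex[OF inj])
  also have "\<dots> \<le> (\<Sum>x\<le>m. f x)"
    using T by (intro sum_mono2) (auto simp: f_def)
  finally show ?thesis unfolding tie_prob_def f_def T_def .
qed

lemma one_minus_exp_ge:
  fixes s :: real
  assumes "s \<ge> 0"
  shows "1 - exp (- s) \<ge> s / (1 + s)"
proof -
  have "exp s \<ge> 1 + s" by (rule exp_ge_add_one_self_aux[OF assms])
  then have "exp (- s) \<le> 1 / (1 + s)" using assms by (simp add: exp_minus field_simps)
  then show ?thesis using assms by (simp add: field_simps)
qed

lemma tie_bound_arith:
  fixes P q s eps R :: real
  assumes P: "P \<ge> 0" and q: "q > 0" and Pq: "2 * q * P \<ge> 1" and eps: "eps > 0"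
    and s: "s \<ge> eps * q / 6" and R: "R \<ge> q" "eps * R \<ge> 1"
  shows "P / 4 * (s / (1 + s)) \<ge> 1 / (64 * R)"
proof -
  define s0 where "s0 = eps * q / 6"
  have s00: "s0 \<ge> 0" using eps q by (simp add: s0_def)
  have Rpos: "R > 0" using R q by linarith
  have P1: "P \<ge> 1 / (2 * q)" using Pq q by (simp add: field_simps)
  have f: "s0 / (1 + s0) \<le> s / (1 + s)" using s00 s unfolding s0_def[symmetric] by (simp add: field_simps)
  have "1 / (2 * q) / 4 * (s0 / (1 + s0)) \<le> P / 4 * (s0 / (1 + s0))"
    using P1 s00 by (intro mult_right_mono) auto
  also have "\<dots> \<le> P / 4 * (s / (1 + s))" using f P by (intro mult_left_mono) auto
  finally have A: "1 / (2 * q) / 4 * (s0 / (1 + s0)) \<le> P / 4 * (s / (1 + s))" .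
  have B: "1 / (2 * q) / 4 * (s0 / (1 + s0)) = eps / (8 * (6 + eps * q))"
    unfolding s0_def using q eps by (simp add: field_simps)
  have "eps * q \<le> eps * R" using R eps by (intro mult_left_mono) auto
  then have C: "6 + eps * q \<le> 7 * (eps * R)" using R by linarith
  have "1 / (64 * R) = eps / (64 * (eps * R))" using eps by simp
  also have "\<dots> \<le> eps / (8 * (7 * (eps * R)))" using eps R Rpos by (intro divide_left_mono) auto
  also have "\<dots> \<le> eps / (8 * (6 + eps * q))"
    using C eps q Rpos by (intro divide_left_mono) (auto intro!: add_pos_pos mult_pos_pos)
  finally show ?thesis using A B by linarith
qed

text \<open>The window of width about sqrt m around the median carries a constant fraction of the
  binomial mass, and the discrete Laplace noise puts mass about min(1, e0 sqrt m) on it.\<close>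

lemma tie_prob_lower:
  assumes eps: "eps > 0"
  shows "tie_prob (eps / 2) m \<ge> 1 / (64 * sqrt (real m + 1 + 1 / eps ^ 2))"
proof -
  define q where "q = sqrt (real m + 1)"
  define J where "J = nat \<lfloor>q / 3\<rfloor>"
  define P where "P = real (m choose ((m + 1) div 2)) / 2 ^ m"
  define R where "R = sqrt (real m + 1 + 1 / eps ^ 2)"
  define s where "s = eps / 2 * (real J + 1)"
  have q1: "q \<ge> 1" unfolding q_def by simp
  have Jq: "real J \<le> q / 3" "q / 3 < real J + 1"
    using q1 unfolding J_def by linarith+
  have "real J ^ 2 \<le> (q / 3) ^ 2" using Jq by (intro power_mono) auto
  then have "real (9 * J ^ 2) \<le> real (m + 1)" unfolding q_def by (simp add: power_divide)
  then have J9: "9 * J ^ 2 \<le> m + 1" by (simp only: of_nat_le_iff)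
  have "s / (1 + s) / 2 \<le> (1 - exp (- s)) / 2"
    using one_minus_exp_ge[of s] eps unfolding s_def by (intro divide_right_mono) auto
  also have "\<dots> \<le> (\<Sum>j\<le>J. pmf (dlap (eps / 2)) (int j))"
    using sum_pmf_dlap_ge[of "eps / 2" J] eps unfolding s_def by simp
  finally have "P / 2 * (s / (1 + s) / 2) \<le> P / 2 * (\<Sum>j\<le>J. pmf (dlap (eps / 2)) (int j))"
    unfolding P_def by (intro mult_left_mono) auto
  also have "\<dots> \<le> tie_prob (eps / 2) m"
    using tie_prob_ge_window[OF J9, of "eps / 2"] unfolding P_def by simp
  finally have S: "P / 4 * (s / (1 + s)) \<le> tie_prob (eps / 2) m" by simp
  have "eps / 2 * (q / 3) \<le> eps / 2 * (real J + 1)" using Jq eps by (intro mult_left_mono) auto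
  then have "eps * q / 6 \<le> s" unfolding s_def by simp
  moreover have "q \<le> R" unfolding R_def q_def by (intro real_sqrt_le_mono) auto
  moreover have "1 \<le> eps * R"
  proof -
    have "1 / eps = sqrt (1 / eps ^ 2)" using eps by (simp add: real_sqrt_divide)
    also have "\<dots> \<le> R" unfolding R_def by (intro real_sqrt_le_mono) auto
    finally show ?thesis using eps by (simp add: field_simps)
  qed
  ultimately have "1 / (64 * R) \<le> P / 4 * (s / (1 + s))"
    using middle_binomial_prob_ge[of m] q1 eps unfolding P_def q_def
    by (intro tie_bound_arith) auto
  then show ?thesis using S unfolding R_def by simp
qed

section \<open>Cut probability of an edge\<close>

lemma cut_prob_given_thresholds:
  fixes D :: "int pmf" and tu tv :: "bool \<Rightarrow> bool \<Rightarrow> int"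
  shows "(\<integral>a1. \<integral>a2. \<integral>b1. \<integral>b2. \<integral>zu. \<integral>zv.
            of_bool ((if zu \<le> tu a1 b1 then a1 else a2) \<noteq> (if zv \<le> tv a1 b1 then b1 else b2))
          \<partial>measure_pmf D \<partial>measure_pmf D \<partial>measure_pmf coin \<partial>measure_pmf coin \<partial>measure_pmf coin \<partial>measure_pmf coin)
         = 1 / 2 + 1 / 8 * (cdf_int D (tu True False) * cdf_int D (tv True False) + cdf_int D (tu False True) * cdf_int D (tv False True)
                          - cdf_int D (tu True True) * cdf_int D (tv True True) - cdf_int D (tu False False) * cdf_int D (tv False False))"
proof -
  have inner: "(\<integral>zv. of_bool (x \<noteq> (if zv \<le> t then b1 else b2)) \<partial>measure_pmf D)
       = cdf_int D t * of_bool (x \<noteq> b1) + (1 - cdf_int D t) * of_bool (x \<noteq> b2)" for x t b1 b2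
    using integral_threshold[where f = "\<lambda>k. of_bool (x \<noteq> (if k then b1 else b2))" and t = t and D = D] by simp
  have zz: "(\<integral>zu. \<integral>zv. of_bool ((if zu \<le> s then a1 else a2) \<noteq> (if zv \<le> t then b1 else b2)) \<partial>measure_pmf D \<partial>measure_pmf D)
      = cdf_int D s * (cdf_int D t * of_bool (a1 \<noteq> b1) + (1 - cdf_int D t) * of_bool (a1 \<noteq> b2))
        + (1 - cdf_int D s) * (cdf_int D t * of_bool (a2 \<noteq> b1) + (1 - cdf_int D t) * of_bool (a2 \<noteq> b2))" for s t :: int and a1 a2 b1 b2 :: bool
    unfolding inner
    by (rule integral_threshold_if[where g = "\<lambda>x. cdf_int D t * of_bool (x \<noteq> b1) + (1 - cdf_int D t) * of_bool (x \<noteq> b2)"])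
  show ?thesis
    unfolding zz by (simp add: integral_coin) (simp add: field_simps)
qed

definition agree_count :: "nat set set \<Rightarrow> nat \<Rightarrow> nat \<Rightarrow> (nat \<Rightarrow> bool \<times> bool \<times> int) \<Rightarrow> bool \<Rightarrow> nat" where
  "agree_count E u v g a = card {w \<in> other_nbrs E u v. fst (g w) = a}"

text \<open>The keep threshold of u when c1 u = a, c1 v = b and all other first colours are read off g.\<close>

definition cond_threshold :: "nat set set \<Rightarrow> nat \<Rightarrow> nat \<Rightarrow> (nat \<Rightarrow> bool \<times> bool \<times> int) \<Rightarrow> bool \<Rightarrow> bool \<Rightarrow> int" where
  "cond_threshold E u v g a b = half_degree E u - (if a = b then 1 else 0) - int (agree_count E u v g a)"

definition alg_sample_output :: "nat \<Rightarrow> nat set set \<Rightarrow> (nat \<Rightarrow> bool \<times> bool \<times> int) \<Rightarrow> nat set" where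
  "alg_sample_output n E r = alg_output n E (\<lambda>v. fst (r v)) (\<lambda>v. fst (snd (r v))) (\<lambda>v. snd (snd (r v)))"

lemma keep_threshold_cond:
  assumes sg: "simple_graph n E" and uv: "{u, v} \<in> E" and c1u: "c1 u = a" and c1v: "c1 v = b"
    and c1w: "\<And>w. w \<noteq> u \<Longrightarrow> w \<noteq> v \<Longrightarrow> c1 w = fst (g w)"
  shows "keep_threshold E c1 u = cond_threshold E u v g a b"
proof -
  have uv': "u \<noteq> v" using simple_graph_edgeD[OF sg uv] by simp
  define S where "S = {w \<in> other_nbrs E u v. fst (g w) = a}"
  have fS: "finite S" unfolding S_def other_nbrs_def
    by (rule finite_subset[OF _ finite_neighbours[OF sg, of u "\<lambda>_. True"]]) auto
  have vS: "v \<notin> S" unfolding S_def other_nbrs_def by auto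
  have eq: "{w. {w, u} \<in> E \<and> c1 w = c1 u} = (if b = a then insert v S else S)"
  proof (intro set_eqI iffI)
    fix w assume w: "w \<in> {w. {w, u} \<in> E \<and> c1 w = c1 u}"
    then have wu: "w \<noteq> u" using simple_graph_edgeD[OF sg, of w u] by auto
    show "w \<in> (if b = a then insert v S else S)"
    proof (cases "w = v")
      case True then show ?thesis using w c1u c1v by auto
    next
      case False then show ?thesis using w wu c1u c1w[OF wu False] by (auto simp: S_def other_nbrs_def)
    qed
  next
    fix w assume w: "w \<in> (if b = a then insert v S else S)"
    show "w \<in> {w. {w, u} \<in> E \<and> c1 w = c1 u}"
    proof (cases "w = v")
      case True then show ?thesis using w vS uv c1u c1v by (auto simp: insert_commute split: if_splits)
    next
      case False
      then have "w \<in> S" using w by (auto split: if_splits)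
      then have "{w, u} \<in> E" "fst (g w) = a" "w \<noteq> v" unfolding S_def other_nbrs_def by auto
      moreover have "w \<noteq> u" using simple_graph_edgeD[OF sg \<open>{w, u} \<in> E\<close>] by simp
      ultimately show ?thesis using c1u c1w by auto
    qed
  qed
  have card: "int (card {w. {w, u} \<in> E \<and> c1 w = c1 u}) = (if a = b then 1 else 0) + int (agree_count E u v g a)"
    unfolding eq agree_count_def S_def[symmetric] using fS vS by auto
  show ?thesis unfolding keep_threshold_def cond_threshold_def half_degree_def card by simp
qed

lemma indicator_cut_sample:
  assumes sg: "simple_graph n E" and uv: "{u, v} \<in> E"
  shows "indicator {r. alg_sample_output n E r \<in> {S. (u \<in> S) \<noteq> (v \<in> S)}} ((g(v := (b1, b2, zv)))(u := (a1, a2, zu)))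
       = (of_bool ((if zu \<le> cond_threshold E u v g a1 b1 then a1 else a2) \<noteq> (if zv \<le> cond_threshold E v u g b1 a1 then b1 else b2)) :: real)"
proof -
  have un: "u < n" "v < n" "u \<noteq> v" using simple_graph_edgeD[OF sg uv] by auto
  define r where "r = (g(v := (b1, b2, zv)))(u := (a1, a2, zu))"
  define c1 where "c1 = (\<lambda>w. fst (r w))"
  have vu: "{v, u} \<in> E" using uv by (simp add: insert_commute)
  have tu: "keep_threshold E c1 u = cond_threshold E u v g a1 b1"
    by (rule keep_threshold_cond[OF sg uv]) (use un in \<open>auto simp: c1_def r_def\<close>)
  have tv: "keep_threshold E c1 v = cond_threshold E v u g b1 a1"
    by (rule keep_threshold_cond[OF sg vu]) (use un in \<open>auto simp: c1_def r_def\<close>)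
  have ru: "r u = (a1, a2, zu)" "r v = (b1, b2, zv)" "c1 u = a1" "c1 v = b1"
    using un by (auto simp: r_def c1_def)
  have O: "alg_sample_output n E r = {w. w < n \<and> (if snd (snd (r w)) \<le> keep_threshold E c1 w then c1 w else fst (snd (r w)))}"
    unfolding alg_sample_output_def alg_output_keep_threshold c1_def by simp
  have "u \<in> alg_sample_output n E r \<longleftrightarrow> (if snd (snd (r u)) \<le> keep_threshold E c1 u then c1 u else fst (snd (r u)))"
    unfolding O using un by simp
  also have "\<dots> \<longleftrightarrow> (if zu \<le> cond_threshold E u v g a1 b1 then a1 else a2)" unfolding tu ru by simp
  finally have 1: "u \<in> alg_sample_output n E r \<longleftrightarrow> (if zu \<le> cond_threshold E u v g a1 b1 then a1 else a2)" .
  have "v \<in> alg_sample_output n E r \<longleftrightarrow> (if snd (snd (r v)) \<le> keep_threshold E c1 v then c1 v else fst (snd (r v)))"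
    unfolding O using un by simp
  also have "\<dots> \<longleftrightarrow> (if zv \<le> cond_threshold E v u g b1 a1 then b1 else b2)" unfolding tv ru by simp
  finally have 2: "v \<in> alg_sample_output n E r \<longleftrightarrow> (if zv \<le> cond_threshold E v u g b1 a1 then b1 else b2)" .
  show ?thesis unfolding r_def[symmetric] using 1 2 by (simp add: indicator_def)
qed

text \<open>The probability that the edge uv is cut, given the coins and noise g of all other vertices.\<close>

definition cond_cut_prob :: "int pmf \<Rightarrow> nat set set \<Rightarrow> nat \<Rightarrow> nat \<Rightarrow> (nat \<Rightarrow> bool \<times> bool \<times> int) \<Rightarrow> real"
  where "cond_cut_prob D E u v g =
    1 / 2 + 1 / 8 * (cdf_int D (cond_threshold E u v g True False) * cdf_int D (cond_threshold E v u g False True)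
                   + cdf_int D (cond_threshold E u v g False True) * cdf_int D (cond_threshold E v u g True False)
                   - cdf_int D (cond_threshold E u v g True True) * cdf_int D (cond_threshold E v u g True True)
                   - cdf_int D (cond_threshold E u v g False False) * cdf_int D (cond_threshold E v u g False False))"

lemma prob_cut_given_others:
  fixes D :: "int pmf"
  assumes sg: "simple_graph n E" and uv: "{u, v} \<in> E"
  defines "Q \<equiv> pair_pmf coin (pair_pmf coin D)"
  shows "measure_pmf.prob (Q \<bind> (\<lambda>yu. Q \<bind> (\<lambda>yv. return_pmf ((g(v := yv))(u := yu)))))
           {r. alg_sample_output n E r \<in> {S. (u \<in> S) \<noteq> (v \<in> S)}}
         = cond_cut_prob D E u v g"
proof -
  have "measure_pmf.prob (Q \<bind> (\<lambda>yu. Q \<bind> (\<lambda>yv. return_pmf ((g(v := yv))(u := yu)))))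
          {r. alg_sample_output n E r \<in> {S. (u \<in> S) \<noteq> (v \<in> S)}}
      = (\<integral>a1. \<integral>a2. \<integral>b1. \<integral>b2. \<integral>zu. \<integral>zv.
            indicator {r. alg_sample_output n E r \<in> {S. (u \<in> S) \<noteq> (v \<in> S)}}
              ((g(v := (b1, b2, zv)))(u := (a1, a2, zu)))
          \<partial>measure_pmf D \<partial>measure_pmf D \<partial>measure_pmf coin \<partial>measure_pmf coin \<partial>measure_pmf coin \<partial>measure_pmf coin)"
    unfolding Q_def
    by (simp only: bind_pair_pmf_assoc bind_commute_pmf[of D coin] measure_pmf_prob_bind measure_return_pmf)
  also have "\<dots> = (\<integral>a1. \<integral>a2. \<integral>b1. \<integral>b2. \<integral>zu. \<integral>zv.
            of_bool ((if zu \<le> cond_threshold E u v g a1 b1 then a1 else a2)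
                     \<noteq> (if zv \<le> cond_threshold E v u g b1 a1 then b1 else b2))
          \<partial>measure_pmf D \<partial>measure_pmf D \<partial>measure_pmf coin \<partial>measure_pmf coin \<partial>measure_pmf coin \<partial>measure_pmf coin)"
    unfolding indicator_cut_sample[OF sg uv] ..
  also have "\<dots> = cond_cut_prob D E u v g"
    unfolding cond_cut_prob_def
    by (rule cut_prob_given_thresholds[where tu = "\<lambda>a b. cond_threshold E u v g a b"
          and tv = "\<lambda>a b. cond_threshold E v u g b a"])
  finally show ?thesis .
qed

lemma prob_cut_eq_integral:
  assumes sg: "simple_graph n E" and uv: "{u, v} \<in> E"
  shows "measure_pmf.prob (alg eps n E) {S. (u \<in> S) \<noteq> (v \<in> S)} =
    (\<integral>g. cond_cut_prob (dlap (eps / 2)) E u v g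
      \<partial>measure_pmf (Pi_pmf ({..<n} - {u, v}) (False, False, 0) (\<lambda>_. pair_pmf coin (pair_pmf coin (dlap (eps / 2))))))"
proof -
  define Q where "Q = pair_pmf coin (pair_pmf coin (dlap (eps / 2)))"
  define R where "R = {..<n} - {u, v}"
  define X where "X = {r. alg_sample_output n E r \<in> {S. (u \<in> S) \<noteq> (v \<in> S)}}"
  have un: "u < n" "v < n" "u \<noteq> v" using simple_graph_edgeD[OF sg uv] by auto
  have A: "{..<n} = insert u (insert v R)" using un by (auto simp: R_def)
  have "alg eps n E = map_pmf (alg_sample_output n E) (Pi_pmf {..<n} (False, False, 0) (\<lambda>_. Q))"
    unfolding alg_def alg_sample_output_def Q_def by (simp add: comp_def)
  then have "measure_pmf.prob (alg eps n E) {S. (u \<in> S) \<noteq> (v \<in> S)}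
             = measure_pmf.prob (Pi_pmf {..<n} (False, False, 0) (\<lambda>_. Q)) X"
    by (simp add: X_def vimage_def)
  also have "Pi_pmf {..<n} (False, False, 0) (\<lambda>_. Q) =
             Pi_pmf R (False, False, 0) (\<lambda>_. Q) \<bind> (\<lambda>g. Q \<bind> (\<lambda>yu. Q \<bind> (\<lambda>yv. return_pmf ((g(v := yv))(u := yu)))))"
    unfolding A by (rule Pi_pmf_insert_pair) (auto simp: R_def un)
  also have "measure_pmf.prob \<dots> X = (\<integral>g. measure_pmf.prob (Q \<bind> (\<lambda>yu. Q \<bind> (\<lambda>yv. return_pmf ((g(v := yv))(u := yu))))) X
                                       \<partial>Pi_pmf R (False, False, 0) (\<lambda>_. Q))"
    by (rule measure_pmf_prob_bind)
  also have "\<dots> = (\<integral>g. cond_cut_prob (dlap (eps / 2)) E u v g \<partial>Pi_pmf R (False, False, 0) (\<lambda>_. Q))"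
    unfolding X_def Q_def by (intro Bochner_Integration.integral_cong refl prob_cut_given_others[OF sg uv])
  finally show ?thesis unfolding Q_def R_def .
qed

text \<open>The probability that a vertex with m neighbours besides v keeps its first colour, where
  k = 1 if the first colours of the vertex and of v agree and k = 0 otherwise.\<close>

definition keep_prob :: "real \<Rightarrow> nat \<Rightarrow> int \<Rightarrow> real" where
  "keep_prob e0 m k =
     (\<Sum>x\<le>m. real (m choose x) / 2 ^ m * cdf_int (dlap e0) (int ((m + 1) div 2) - k - int x))"

lemma keep_prob_nonneg: "keep_prob e0 m k \<ge> 0"
  unfolding keep_prob_def by (intro sum_nonneg mult_nonneg_nonneg cdf_int_nonneg) auto

lemma keep_prob_diff: "keep_prob e0 m 0 - keep_prob e0 m 1 = tie_prob e0 m"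
proof -
  let ?D = "dlap e0" and ?T = "int ((m + 1) div 2)"
  have "keep_prob e0 m 0 - keep_prob e0 m 1 =
        (\<Sum>x\<le>m. real (m choose x) / 2 ^ m * (cdf_int ?D (?T - int x) - cdf_int ?D (?T - int x - 1)))"
    unfolding keep_prob_def by (simp add: sum_subtractf[symmetric] algebra_simps)
  also have "\<dots> = tie_prob e0 m" unfolding tie_prob_def cdf_int_diff by simp
  finally show ?thesis .
qed

lemma keep_prob_0_ge:
  assumes e0: "e0 > 0"
  shows "keep_prob e0 m 0 \<ge> 1 / 4"
proof -
  let ?D = "dlap e0"
  define T where "T = (m + 1) div 2"
  have "1 / 4 \<le> (\<Sum>x\<le>T. real (m choose x)) / 2 ^ m / 2"
    using sum_binomial_upto_half_ge[of m] unfolding T_def[symmetric] by (simp add: field_simps)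
  also have "\<dots> = (\<Sum>x\<le>T. real (m choose x) / 2 ^ m * (1 / 2))"
    by (simp add: sum_divide_distrib[symmetric] sum_distrib_right[symmetric])
  also have "\<dots> \<le> (\<Sum>x\<le>T. real (m choose x) / 2 ^ m * cdf_int ?D (int T - int x))"
  proof (intro sum_mono mult_left_mono)
    fix x assume "x \<in> {..T}"
    then have "cdf_int ?D 0 \<le> cdf_int ?D (int T - int x)" by (intro cdf_int_mono) simp
    then show "1 / 2 \<le> cdf_int ?D (int T - int x)"
      using prob_dlap_nonpos_ge_half[OF e0, folded cdf_int_def] by linarith
  qed simp
  also have "\<dots> \<le> keep_prob e0 m 0"
    unfolding keep_prob_def T_def[symmetric] diff_zero
    by (intro sum_mono2)
       (auto simp: T_def intro!: mult_nonneg_nonneg divide_nonneg_nonneg cdf_int_nonneg simp del: divide_le_0_iff)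
  finally show ?thesis .
qed

lemma product_gap_ge:
  fixes p0 p1 q0 q1 :: real
  assumes "1 / 4 \<le> p0" "1 / 4 \<le> q0" "0 \<le> p1" "0 \<le> q1" "p1 \<le> p0" "q1 \<le> q0"
  shows "((p0 - p1) + (q0 - q1)) / 8 \<le> p0 * q0 - p1 * q1"
proof -
  have "1 / 4 * (q0 - q1) \<le> p0 * (q0 - q1)" using assms by (intro mult_right_mono) simp_all
  moreover have "1 / 4 * (p0 - p1) \<le> (p0 - p1) * q0"
    using mult_right_mono[of "1 / 4" q0 "p0 - p1"] assms by (simp add: mult.commute)
  moreover have "0 \<le> (p0 - p1) * q1" "0 \<le> p1 * (q0 - q1)" using assms by simp_all
  moreover have "p0 * (q0 - q1) = p0 * q0 - p0 * q1" "(p0 - p1) * q0 = p0 * q0 - p1 * q0"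
    "(p0 - p1) * q1 = p0 * q1 - p1 * q1" "p1 * (q0 - q1) = p1 * q0 - p1 * q1"
    by (simp_all add: algebra_simps)
  ultimately show ?thesis by argo
qed

text \<open>Conditioned on the coins and noise outside u and v, the first-colour counts among the
  other neighbours of u and of v are independent binomials, because a triangle-free graph gives
  u and v no common neighbour.\<close>

lemma alg_cut_prob_eq:
  assumes sg: "simple_graph n E" and tf: "triangle_free E" and uv: "{u, v} \<in> E"
  defines "mu \<equiv> card (other_nbrs E u v)" and "mv \<equiv> card (other_nbrs E v u)"
  shows "measure_pmf.prob (alg eps n E) {S. (u \<in> S) \<noteq> (v \<in> S)} =
         1 / 2 + (keep_prob (eps / 2) mu 0 * keep_prob (eps / 2) mv 0
                  - keep_prob (eps / 2) mu 1 * keep_prob (eps / 2) mv 1) / 4"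
proof -
  define D where "D = dlap (eps / 2)"
  define R where "R = {..<n} - {u, v}"
  define G where "G = Pi_pmf R (False, False, 0) (\<lambda>_. pair_pmf coin (pair_pmf coin D))"
  define X where "X a b g = cdf_int D (cond_threshold E u v g a b) * cdf_int D (cond_threshold E v u g b a)"
    for a b g
  have vu: "{v, u} \<in> E" using uv by (simp add: insert_commute)
  have finite_R: "finite R" unfolding R_def by simp
  have dU: "degree E u = mu + 1" "other_nbrs E u v \<subseteq> R"
    using degree_other_nbrs[OF sg uv] unfolding mu_def R_def by auto
  have dV: "degree E v = mv + 1" "other_nbrs E v u \<subseteq> R"
    using degree_other_nbrs[OF sg vu] unfolding mv_def R_def by (auto simp: insert_commute)
  have EX: "(\<integral>g. X a b g \<partial>measure_pmf G) =
            keep_prob (eps / 2) mu (if a = b then 1 else 0) * keep_prob (eps / 2) mv (if a = b then 1 else 0)"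
    for a b
  proof -
    have "(\<integral>g. X a b g \<partial>measure_pmf G) =
          (\<integral>g. (\<lambda>x. cdf_int D (int ((mu + 1) div 2) - (if a = b then 1 else 0) - int x))
                  (card {w \<in> other_nbrs E u v. fst (g w) = a})
             * (\<lambda>y. cdf_int D (int ((mv + 1) div 2) - (if a = b then 1 else 0) - int y))
                  (card {w \<in> other_nbrs E v u. fst (g w) = b}) \<partial>measure_pmf G)"
      unfolding X_def cond_threshold_def agree_count_def half_degree_def dU(1) dV(1) ceiling_half_nat
      by (simp add: eq_commute[of b a])
    also have "\<dots> = keep_prob (eps / 2) mu (if a = b then 1 else 0) * keep_prob (eps / 2) mv (if a = b then 1 else 0)"
      unfolding G_def keep_prob_def mu_def mv_def D_def
      by (rule expectation_disjoint_counts[OF finite_R dU(2) dV(2) other_nbrs_disjoint[OF tf uv]])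
        (rule cdf_int_abs_le_1)+
    finally show ?thesis .
  qed
  have intX: "integrable (measure_pmf G) (X a b)" for a b
    by (rule integrable_pmf_bounded[where B = 1])
       (auto simp: X_def abs_mult cdf_int_nonneg cdf_int_le_1 intro!: mult_le_one)
  have "measure_pmf.prob (alg eps n E) {S. (u \<in> S) \<noteq> (v \<in> S)} = (\<integral>g. cond_cut_prob D E u v g \<partial>measure_pmf G)"
    unfolding G_def R_def D_def by (rule prob_cut_eq_integral[OF sg uv])
  also have "\<dots> = (\<integral>g. 1 / 2 + 1 / 8 * (X True False g + X False True g - X True True g - X False False g) \<partial>measure_pmf G)"
    unfolding cond_cut_prob_def X_def ..
  also have "\<dots> = 1 / 2 + 1 / 8 * ((\<integral>g. X True False g \<partial>measure_pmf G) + (\<integral>g. X False True g \<partial>measure_pmf G)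
                     - (\<integral>g. X True True g \<partial>measure_pmf G) - (\<integral>g. X False False g \<partial>measure_pmf G))"
    using intX by simp
  also have "\<dots> = 1 / 2 + (keep_prob (eps / 2) mu 0 * keep_prob (eps / 2) mv 0
                           - keep_prob (eps / 2) mu 1 * keep_prob (eps / 2) mv 1) / 4"
    unfolding EX by simp
  finally show ?thesis .
qed

lemma alg_cut_prob_ge:
  assumes eps: "eps > 0" and sg: "simple_graph n E" and tf: "triangle_free E" and uv: "{u, v} \<in> E"
  shows "measure_pmf.prob (alg eps n E) {S. (u \<in> S) \<noteq> (v \<in> S)} \<ge>
         1 / 2 + (tie_prob (eps / 2) (card (other_nbrs E u v)) + tie_prob (eps / 2) (card (other_nbrs E v u))) / 32"
proof -
  let ?k = "keep_prob (eps / 2)" and ?mu = "card (other_nbrs E u v)" and ?mv = "card (other_nbrs E v u)"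
  have k: "?k m 0 - ?k m 1 = tie_prob (eps / 2) m" "1 / 4 \<le> ?k m 0" "0 \<le> ?k m 1" "?k m 1 \<le> ?k m 0"
    for m using keep_prob_diff[of "eps / 2" m] keep_prob_0_ge[of "eps / 2" m] keep_prob_nonneg
      tie_prob_nonneg[of "eps / 2" m] eps by auto
  have "((?k ?mu 0 - ?k ?mu 1) + (?k ?mv 0 - ?k ?mv 1)) / 8 \<le> ?k ?mu 0 * ?k ?mv 0 - ?k ?mu 1 * ?k ?mv 1"
    by (rule product_gap_ge) (simp_all only: k(2-4))
  then have "(tie_prob (eps / 2) ?mu + tie_prob (eps / 2) ?mv) / 8
             \<le> ?k ?mu 0 * ?k ?mv 0 - ?k ?mu 1 * ?k ?mv 1"
    by (simp only: k(1))
  then show ?thesis unfolding alg_cut_prob_eq[OF sg tf uv] by simp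
qed

lemma tie_prob_other_nbrs_ge:
  assumes eps: "eps > 0" and sg: "simple_graph n E" and uv: "{u, v} \<in> E"
  shows "tie_prob (eps / 2) (card (other_nbrs E u v)) \<ge> 1 / (64 * sqrt (real (degree E u) + 1 / eps ^ 2))"
  using tie_prob_lower[OF eps, of "card (other_nbrs E u v)"] degree_other_nbrs[OF sg uv]
  by (simp add: add.commute)

lemma alg_cut_prob_lower:
  assumes eps: "eps > 0" and sg: "simple_graph n E" and tf: "triangle_free E" and uv: "{u, v} \<in> E"
  shows "measure_pmf.prob (alg eps n E) {S. (u \<in> S) \<noteq> (v \<in> S)}
           \<ge> 1/2 + 1 / 2048 * (1 / sqrt (real (degree E u) + 1 / eps^2) + 1 / sqrt (real (degree E v) + 1 / eps^2))"
proof -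
  have vu: "{v, u} \<in> E" using uv by (simp add: insert_commute)
  have "1/2 + 1 / 2048 * (1 / sqrt (real (degree E u) + 1 / eps^2) + 1 / sqrt (real (degree E v) + 1 / eps^2))
        = 1 / 2 + (1 / (64 * sqrt (real (degree E u) + 1 / eps ^ 2))
                   + 1 / (64 * sqrt (real (degree E v) + 1 / eps ^ 2))) / 32"
    by simp
  also have "\<dots> \<le> 1 / 2 + (tie_prob (eps / 2) (card (other_nbrs E u v))
                           + tie_prob (eps / 2) (card (other_nbrs E v u))) / 32"
    using tie_prob_other_nbrs_ge[OF eps sg uv] tie_prob_other_nbrs_ge[OF eps sg vu] by simp
  also have "\<dots> \<le> measure_pmf.prob (alg eps n E) {S. (u \<in> S) \<noteq> (v \<in> S)}"
    by (rule alg_cut_prob_ge[OF eps sg tf uv])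
  finally show ?thesis .
qed

theorem theorem5p5:
  shows "(\<forall>(eps::real) (n::nat) E E' (T :: nat set set).
            eps > 0 \<longrightarrow> n > 0 \<longrightarrow> edge_neighbors n E E' \<longrightarrow>
            measure_pmf.prob (alg eps n E) T \<le> exp eps * measure_pmf.prob (alg eps n E') T)
       \<and> (\<exists>C::real. C > 0 \<and>
            (\<forall>(eps::real) (n::nat) E u v.
               eps > 0 \<longrightarrow> n > 0 \<longrightarrow> simple_graph n E \<longrightarrow> triangle_free E \<longrightarrow> {u, v} \<in> E \<longrightarrow>
               measure_pmf.prob (alg eps n E) {S. (u \<in> S) \<noteq> (v \<in> S)}
                 \<ge> 1/2 + C * (1 / sqrt (real (degree E u) + 1 / eps^2)
                              + 1 / sqrt (real (degree E v) + 1 / eps^2))))"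
  by (intro conjI exI[of _ "1 / 2048"] allI impI alg_differential_privacy alg_cut_prob_lower) auto

end
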